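(* Let $G$ be a finite group and $p$ a prime. The categories $\mathcal S^*_G,\mathcal T^*_G,\mathcal L^*_G,\mathcal F^*_G,\widetilde{\mathcal F}^*_G,\mathcal O^*_G$ have Euler characteristics in the sense of Leinster, and \[ \chi(\mathcal C^* )=\sum_{[H]}\frac{-\mu(H)}{|\mathcal C^*(H)|},\qquad \mathcal C^*=\mathcal T^*_G,\ \mathcal L^*_G,\ \mathcal F^*_G, \] where the sum runs over the set of $G$-conjugacy classes $[H]$ of nonidentity $p$-subgroups $H$ of $G$. Moreover $\chi(\mathcal S^*_G)=|G|\,\chi(\mathcal T^*_G)$, $\chi(\widetilde{\mathcal F}^*_G)=\chi(\mathcal F^*_G)$, and \[ \chi(\mathcal O^*_G)=\chi(\mathcal T^*_G)+\frac{p-1}{p}\sum_{[C]\text{ cyclic}}\frac{1}{|\mathcal O^*_G(C)|}, \] where the last sum runs over the set of $G$-conjugacy classes of nonidentity cyclic $p$-subgroups $C$ of $G$.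
   Context: For subgroups $H,K\le G$ and $g\in G$ write $H^g=g^{-1}Hg$ and $N_G(H,K)=\{g\in G: H^g\le K\}$. For a finite group $X$, $O^p(X)$ is the smallest normal subgroup of $X$ whose quotient is a $p$-group. The following categories all have as objects the nonidentity $p$-subgroups of $G$, with composition induced by multiplication in $G$: the poset $\mathcal S^*_G$ (exactly one morphism $H\to K$ if $H\le K$, none otherwise); $\mathcal T^*_G(H,K)=N_G(H,K)$; $\mathcal L^*_G(H,K)=O^p(C_G(H))\backslash N_G(H,K)$; $\mathcal F^*_G(H,K)=C_G(H)\backslash N_G(H,K)$; $\mathcal O^*_G(H,K)=N_G(H,K)/K$; $\widetilde{\mathcal F}^*_G(H,K)=C_G(H)\backslash N_G(H,K)/K$ (double cosets). For a category $\mathcal C$, $\mathcal C(H)=\mathcal C(H,H)$; so e.g. $\mathcal T^*_G(H)=N_G(H)$, $\mathcal L^*_G(H)=O^p(C_G(H))\backslash N_G(H)$, $\mathcal F^*_G(H)=C_G(H)\backslash N_G(H)$, $\mathcal O^*_G(H)=N_G(H)/H$. Leinster Euler characteristic: for a finite category $\mathcal C$ let $\zeta(a,b)=|\mathcal C(a,b)|$. A weighting is a function $k^\bullet:\mathrm{Ob}(\mathcal C)\to\mathbb Q$ with $\sum_b\zeta(a,b)k^b=1$ for every object $a$; a coweighting is $k_\bullet:\mathrm{Ob}(\mathcal C)\to\mathbb Q$ with $\sum_a k_a\zeta(a,b)=1$ for every object $b$. If $\mathcal C$ admits both, it has Euler characteristic $\chi(\mathcal C)=\sum_b k^b=\sum_a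 k_a$ (independent of the choices). $\mu(H,K)$ denotes the Möbius function of the poset of all subgroups of $G$ ($\mu(H,H)=1$, $\mu(H,K)=-\sum_{H\le L<K}\mu(H,L)$ if $H<K$, $\mu(H,K)=0$ if $H\not\le K$), and $\mu(K)=\mu(1,K)$. *)

theory Defs
  imports "HOL-Algebra.Algebra"
begin

definition conj_set :: "('a,'b) monoid_scheme \<Rightarrow> 'a set \<Rightarrow> 'a \<Rightarrow> 'a set" where
  "conj_set G H g = {inv\<^bsub>G\<^esub> g \<otimes>\<^bsub>G\<^esub> h \<otimes>\<^bsub>G\<^esub> g | h. h \<in> H}"

definition transporter :: "('a,'b) monoid_scheme \<Rightarrow> 'a set \<Rightarrow> 'a set \<Rightarrow> 'a set" where
  "transporter G H K = {g \<in> carrier G. conj_set G H g \<subseteq> K}"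

definition centralizer_of :: "('a,'b) monoid_scheme \<Rightarrow> 'a set \<Rightarrow> 'a set" where
  "centralizer_of G H = {g \<in> carrier G. \<forall>h\<in>H. g \<otimes>\<^bsub>G\<^esub> h = h \<otimes>\<^bsub>G\<^esub> g}"

definition is_p_power :: "nat \<Rightarrow> nat \<Rightarrow> bool" where
  "is_p_power p n \<longleftrightarrow> (\<exists>k. n = p ^ k)"

text \<open>O^p(X) for a subgroup Y of G: the smallest normal subgroup N of Y with Y/N a p-group,
  i.e. the intersection of all such N.\<close>
definition Op :: "('a,'b) monoid_scheme \<Rightarrow> nat \<Rightarrow> 'a set \<Rightarrow> 'a set" where
  "Op G p Y = Inter {N. subgroup N G \<and> N \<subseteq> Y \<and>
       (\<forall>x\<in>Y. \<forall>n\<in>N. x \<otimes>\<^bsub>G\<^esub> n \<otimes>\<^bsub>G\<^esub> inv\<^bsub>G\<^esub> x \<in> N) \<and>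
       is_p_power p (card Y div card N) \<and> card N dvd card Y}"

definition nonid_p_subgroups :: "('a,'b) monoid_scheme \<Rightarrow> nat \<Rightarrow> 'a set set" where
  "nonid_p_subgroups G p =
     {H. subgroup H G \<and> H \<noteq> {\<one>\<^bsub>G\<^esub>} \<and> is_p_power p (card H)}"

definition cyclic_subgroup :: "('a,'b) monoid_scheme \<Rightarrow> 'a set \<Rightarrow> bool" where
  "cyclic_subgroup G H \<longleftrightarrow> subgroup H G \<and> (\<exists>g\<in>carrier G. H = generate G {g})"

definition conj_class :: "('a,'b) monoid_scheme \<Rightarrow> 'a set \<Rightarrow> 'a set set" where
  "conj_class G H = {conj_set G H g | g. g \<in> carrier G}"

definition conj_classes :: "('a,'b) monoid_scheme \<Rightarrow> 'a set set \<Rightarrow> 'a set set set" where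
  "conj_classes G S = conj_class G ` S"

definition sum_classes :: "('a,'b) monoid_scheme \<Rightarrow> 'a set set \<Rightarrow> ('a set \<Rightarrow> rat) \<Rightarrow> rat" where
  "sum_classes G S f = (\<Sum>Cl\<in>conj_classes G S. f (SOME H. H \<in> Cl \<and> H \<in> S))"

definition homS :: "'a set \<Rightarrow> 'a set \<Rightarrow> unit set" where
  "homS H K = (if H \<subseteq> K then {()} else {})"

definition homT :: "('a,'b) monoid_scheme \<Rightarrow> 'a set \<Rightarrow> 'a set \<Rightarrow> 'a set" where
  "homT G H K = transporter G H K"

definition homL :: "('a,'b) monoid_scheme \<Rightarrow> nat \<Rightarrow> 'a set \<Rightarrow> 'a set \<Rightarrow> 'a set set" where
  "homL G p H K = (\<lambda>g. Op G p (centralizer_of G H) #>\<^bsub>G\<^esub> g) ` transporter G H K"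

definition homF :: "('a,'b) monoid_scheme \<Rightarrow> 'a set \<Rightarrow> 'a set \<Rightarrow> 'a set set" where
  "homF G H K = (\<lambda>g. centralizer_of G H #>\<^bsub>G\<^esub> g) ` transporter G H K"

definition homO :: "('a,'b) monoid_scheme \<Rightarrow> 'a set \<Rightarrow> 'a set \<Rightarrow> 'a set set" where
  "homO G H K = (\<lambda>g. g <#\<^bsub>G\<^esub> K) ` transporter G H K"

definition homFt :: "('a,'b) monoid_scheme \<Rightarrow> 'a set \<Rightarrow> 'a set \<Rightarrow> 'a set set" where
  "homFt G H K = (\<lambda>g. (centralizer_of G H #>\<^bsub>G\<^esub> g) <#>\<^bsub>G\<^esub> K) ` transporter G H K"

section \<open>Leinster Euler characteristic (depends only on zeta(a,b) = |C(a,b)|)\<close>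

definition is_weighting :: "'o set \<Rightarrow> ('o \<Rightarrow> 'o \<Rightarrow> nat) \<Rightarrow> ('o \<Rightarrow> rat) \<Rightarrow> bool" where
  "is_weighting Ob \<zeta> k \<longleftrightarrow> (\<forall>a\<in>Ob. (\<Sum>b\<in>Ob. of_nat (\<zeta> a b) * k b) = 1)"

definition is_coweighting :: "'o set \<Rightarrow> ('o \<Rightarrow> 'o \<Rightarrow> nat) \<Rightarrow> ('o \<Rightarrow> rat) \<Rightarrow> bool" where
  "is_coweighting Ob \<zeta> k \<longleftrightarrow> (\<forall>b\<in>Ob. (\<Sum>a\<in>Ob. k a * of_nat (\<zeta> a b)) = 1)"

definition has_euler_char :: "'o set \<Rightarrow> ('o \<Rightarrow> 'o \<Rightarrow> nat) \<Rightarrow> bool" where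
  "has_euler_char Ob \<zeta> \<longleftrightarrow> finite Ob \<and> (\<exists>k. is_weighting Ob \<zeta> k) \<and> (\<exists>k. is_coweighting Ob \<zeta> k)"

definition euler_char :: "'o set \<Rightarrow> ('o \<Rightarrow> 'o \<Rightarrow> nat) \<Rightarrow> rat" where
  "euler_char Ob \<zeta> = (\<Sum>b\<in>Ob. (SOME k. is_weighting Ob \<zeta> k) b)"

function mobius :: "('a,'b) monoid_scheme \<Rightarrow> 'a set \<Rightarrow> 'a set \<Rightarrow> int" where
  "mobius G H K =
     (if finite (carrier G) \<and> subgroup H G \<and> subgroup K G \<and> H \<subseteq> K then
        (if H = K then 1
         else - (\<Sum>L\<in>{L. subgroup L G \<and> H \<subseteq> L \<and> L \<subset> K}. mobius G H L))
      else 0)"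
  by auto
termination
proof (relation "measure (\<lambda>(G,H,K). card K)")
  show "wf (measure (\<lambda>(G,H,K). card K))" by simp
next
  fix G :: "('a,'b) monoid_scheme" and H K L
  assume a: "finite (carrier G) \<and> subgroup H G \<and> subgroup K G \<and> H \<subseteq> K"
     and L: "L \<in> {L. subgroup L G \<and> H \<subseteq> L \<and> L \<subset> K}"
  have "finite K" using a subgroup.subset finite_subset by metis
  then show "((G, H, L), G, H, K) \<in> measure (\<lambda>(G, H, K). card K)"
    using L by (simp add: psubset_card_mono)
qed

definition mobius1 :: "('a,'b) monoid_scheme \<Rightarrow> 'a set \<Rightarrow> int" where
  "mobius1 G K = mobius G {\<one>\<^bsub>G\<^esub>} K"

end

theory Submission
  imports Defs "HOL-Number_Theory.Totient"
begin

text \<open>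
  All six zeta functions are invariant under simultaneous conjugation, and \<zeta>(H, K) \<noteq> 0
  forces |H| \<le> |K| with equality only for conjugate H and K. Ordering the conjugacy classes
  by order therefore makes \<zeta> block triangular, and a weighting is built class by class.

  The coweightings are explicit. For T, L and F one has \<zeta>(H, K) c(H) = |N_G(H, K)| with
  c(H) = 1, |O^p(C_G(H))|, |C_G(H)| respectively. Counting the pairs (H, g) with H^g \<le> K
  turns the sum of -\<mu>(H) |N_G(H, K)| over H into |G| times the sum of -\<mu>(L) over
  1 < L \<le> K, and the latter sum is 1; hence -\<mu>(H) c(H) / |G| is a coweighting, and collecting it over
  conjugacy classes with |[H]| |N_G(H)| = |G| gives the class sums. For S the coweighting is
  -\<mu> itself. For the double coset category, counting the double cosets C_G(H) g K shows that
  the coweighting of F still works. For O the weights (\<phi>(H) - \<mu>(H)) / |G| work, where \<phi>(H)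
  is the number of generators of H: the generators of the nonidentity subgroups of K
  partition K - 1, and \<phi>(H) vanishes unless H is cyclic, when it is (p - 1) |H| / p.
\<close>

section \<open>Weightings of stratified zeta functions\<close>

lemma weighting_sum_eq_coweighting_sum:
  assumes "is_weighting Ob \<zeta> k" and "is_coweighting Ob \<zeta> c"
  shows "(\<Sum>b\<in>Ob. k b) = (\<Sum>a\<in>Ob. c a)"
proof -
  have "(\<Sum>b\<in>Ob. k b) = (\<Sum>b\<in>Ob. (\<Sum>a\<in>Ob. c a * of_nat (\<zeta> a b)) * k b)"
    using assms(2) unfolding is_coweighting_def by simp
  also have "\<dots> = (\<Sum>a\<in>Ob. c a * (\<Sum>b\<in>Ob. of_nat (\<zeta> a b) * k b))"
    unfolding sum_distrib_left sum_distrib_right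
    by (subst sum.swap) (simp add: mult.assoc mult.commute mult.left_commute)
  also have "\<dots> = (\<Sum>a\<in>Ob. c a)"
    using assms(1) unfolding is_weighting_def by simp
  finally show ?thesis .
qed

lemma euler_char_eq_coweighting_sum:
  assumes "finite Ob" and "is_weighting Ob \<zeta> k" and "is_coweighting Ob \<zeta> c"
  shows "has_euler_char Ob \<zeta>" and "euler_char Ob \<zeta> = (\<Sum>a\<in>Ob. c a)"
proof -
  show "has_euler_char Ob \<zeta>"
    using assms unfolding has_euler_char_def by blast
  have "is_weighting Ob \<zeta> (SOME k. is_weighting Ob \<zeta> k)"
    by (rule someI[where P = "is_weighting Ob \<zeta>", OF assms(2)])
  then show "euler_char Ob \<zeta> = (\<Sum>a\<in>Ob. c a)"
    unfolding euler_char_def using weighting_sum_eq_coweighting_sum assms(3) by blast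
qed

locale stratified_zeta =
  fixes Ob :: "'o set" and \<zeta> :: "'o \<Rightarrow> 'o \<Rightarrow> nat"
    and R :: "'o \<Rightarrow> 'o \<Rightarrow> bool" and rank :: "'o \<Rightarrow> nat"
  assumes finite_Ob: "finite Ob"
    and R_refl: "a \<in> Ob \<Longrightarrow> R a a"
    and R_sym: "a \<in> Ob \<Longrightarrow> b \<in> Ob \<Longrightarrow> R a b \<Longrightarrow> R b a"
    and R_trans: "a \<in> Ob \<Longrightarrow> b \<in> Ob \<Longrightarrow> c \<in> Ob \<Longrightarrow> R a b \<Longrightarrow> R b c \<Longrightarrow> R a c"
    and rank_R: "a \<in> Ob \<Longrightarrow> b \<in> Ob \<Longrightarrow> R a b \<Longrightarrow> rank a = rank b"
    and zeta_nonzero: "a \<in> Ob \<Longrightarrow> b \<in> Ob \<Longrightarrow> \<zeta> a b \<noteq> 0 \<Longrightarrow> rank a < rank b \<or> R a b"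
    and zeta_diag_pos: "a \<in> Ob \<Longrightarrow> 0 < \<zeta> a a"
    and zeta_class_sum: "a \<in> Ob \<Longrightarrow> a' \<in> Ob \<Longrightarrow> b \<in> Ob \<Longrightarrow> R a a' \<Longrightarrow>
       (\<Sum>b'\<in>{b'\<in>Ob. R b b'}. \<zeta> a b') = (\<Sum>b'\<in>{b'\<in>Ob. R b b'}. \<zeta> a' b')"
begin

definition R_class :: "'o \<Rightarrow> 'o set" where
  "R_class b = {b'\<in>Ob. R b b'}"

definition R_closed :: "'o set \<Rightarrow> bool" where
  "R_closed S \<longleftrightarrow> S \<subseteq> Ob \<and> (\<forall>b\<in>S. R_class b \<subseteq> S)"

definition class_constant :: "'o set \<Rightarrow> ('o \<Rightarrow> rat) \<Rightarrow> bool" where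
  "class_constant S k \<longleftrightarrow> (\<forall>a\<in>S. \<forall>b\<in>S. R a b \<longrightarrow> k a = k b)"

lemma R_class_eq: "a \<in> Ob \<Longrightarrow> b \<in> Ob \<Longrightarrow> R a b \<Longrightarrow> R_class a = R_class b"
  unfolding R_class_def using R_sym R_trans by blast

lemma R_closed_diff_class:
  assumes S: "R_closed S" and a: "a \<in> S"
  shows "R_closed (S - R_class a)"
  unfolding R_closed_def
proof (intro conjI ballI)
  show "S - R_class a \<subseteq> Ob" using S unfolding R_closed_def by auto
  fix b assume b: "b \<in> S - R_class a"
  show "R_class b \<subseteq> S - R_class a"
  proof
    fix b' assume b': "b' \<in> R_class b"
    have Ob: "a \<in> Ob" "b \<in> Ob" "b' \<in> Ob"
      using S a b b' unfolding R_closed_def R_class_def by auto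
    have "b' \<in> S" using S b b' unfolding R_closed_def by auto
    moreover have "b' \<notin> R_class a"
    proof
      assume "b' \<in> R_class a"
      then have "R a b" using b' Ob R_sym R_trans unfolding R_class_def by blast
      then show False using b Ob unfolding R_class_def by simp
    qed
    ultimately show "b' \<in> S - R_class a" by simp
  qed
qed

lemma sum_over_R_classes:
  assumes "R_closed S"
  shows "(\<Sum>b\<in>S. g b) = (\<Sum>cls\<in>R_class ` S. sum g cls)"
proof -
  have S: "S \<subseteq> Ob" "finite S"
    using assms finite_Ob finite_subset unfolding R_closed_def by auto
  have "(\<Sum>b\<in>S. g b) = (\<Sum>cls\<in>R_class ` S. \<Sum>b\<in>{b\<in>S. R_class b = cls}. g b)"
    by (rule sum.image_gen[OF S(2)])
  also have "\<dots> = (\<Sum>cls\<in>R_class ` S. sum g cls)"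
  proof (rule sum.cong[OF refl])
    fix cls assume "cls \<in> R_class ` S"
    then obtain b0 where b0: "b0 \<in> S" "cls = R_class b0" by blast
    have "{b\<in>S. R_class b = R_class b0} = R_class b0"
    proof
      show "{b\<in>S. R_class b = R_class b0} \<subseteq> R_class b0"
        using R_refl S(1) b0(1) unfolding R_class_def by blast
      show "R_class b0 \<subseteq> {b\<in>S. R_class b = R_class b0}"
        using assms b0(1) S(1) R_class_eq unfolding R_closed_def R_class_def by blast
    qed
    then show "(\<Sum>b\<in>{b\<in>S. R_class b = cls}. g b) = (\<Sum>b\<in>cls. g b)"
      using b0(2) by simp
  qed
  finally show ?thesis .
qed

lemma row_sum_class_invariant:
  assumes S: "R_closed S" and k: "class_constant S k"
    and a: "a \<in> Ob" "a' \<in> Ob" "R a a'"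
  shows "(\<Sum>b\<in>S. of_nat (\<zeta> a b) * k b) = (\<Sum>b\<in>S. of_nat (\<zeta> a' b) * k b)"
proof -
  have "(\<Sum>b\<in>cls. of_nat (\<zeta> a b) * k b) = (\<Sum>b\<in>cls. of_nat (\<zeta> a' b) * k b)"
    if "cls \<in> R_class ` S" for cls
  proof -
    obtain b0 where b0: "b0 \<in> S" "cls = R_class b0" using \<open>cls \<in> R_class ` S\<close> by blast
    have XS: "cls \<subseteq> S" and b0Ob: "b0 \<in> Ob"
      using S b0 unfolding R_closed_def by auto
    have kX: "k b = k b0" if "b \<in> cls" for b
    proof -
      have "R b0 b" "b \<in> S" using that XS b0(2) unfolding R_class_def by auto
      then show ?thesis using k b0(1) unfolding class_constant_def by (simp add: eq_commute)
    qed
    have "(\<Sum>b\<in>cls. of_nat (\<zeta> a b) * k b) = of_nat (\<Sum>b\<in>cls. \<zeta> a b) * k b0"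
      by (simp add: kX sum_distrib_right)
    also have "\<dots> = of_nat (\<Sum>b\<in>cls. \<zeta> a' b) * k b0"
      using zeta_class_sum[OF a(1,2) b0Ob a(3)] b0(2) unfolding R_class_def by simp
    also have "\<dots> = (\<Sum>b\<in>cls. of_nat (\<zeta> a' b) * k b)"
      by (simp add: kX sum_distrib_right)
    finally show ?thesis .
  qed
  then show ?thesis
    by (simp add: sum_over_R_classes[OF S])
qed

lemma zeta_into_minimal_class:
  assumes S: "R_closed S" and a0: "a0 \<in> S" and a0_min: "\<And>a. a \<in> S \<Longrightarrow> rank a0 \<le> rank a"
    and a: "a \<in> S - R_class a0" and b: "b \<in> R_class a0"
  shows "\<zeta> a b = 0"
proof (rule ccontr)
  assume nz: "\<zeta> a b \<noteq> 0"
  have Ob: "a0 \<in> Ob" "a \<in> Ob" "b \<in> Ob" and R0: "R a0 b"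
    using S a0 a b unfolding R_closed_def R_class_def by auto
  have "rank a0 \<le> rank a" using a0_min a by simp
  then have "\<not> rank a < rank b" using rank_R[OF Ob(1,3) R0] by simp
  then have "R a b" using zeta_nonzero[OF Ob(2,3) nz] by simp
  then have "R a0 a" using R_trans[OF Ob(1,3,2) R0] R_sym[OF Ob(2,3)] by simp
  then show False using a Ob(2) unfolding R_class_def by simp
qed

lemma class_constant_extend:
  assumes S: "R_closed S" and a0: "a0 \<in> S" and k': "class_constant (S - R_class a0) k'"
  shows "class_constant S (\<lambda>b. if b \<in> R_class a0 then t else k' b)"
  unfolding class_constant_def
proof (intro ballI impI)
  fix a b assume ab: "a \<in> S" "b \<in> S" "R a b"
  have Ob: "a0 \<in> Ob" "a \<in> Ob" "b \<in> Ob" using S a0 ab unfolding R_closed_def by auto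
  have "R a0 a \<longleftrightarrow> R a0 b"
    using R_trans[OF Ob(1,2,3)] R_trans[OF Ob(1,3,2)] R_sym[OF Ob(2,3)] ab(3) by blast
  then have "a \<in> R_class a0 \<longleftrightarrow> b \<in> R_class a0" using Ob unfolding R_class_def by simp
  moreover have "k' a = k' b" if "a \<notin> R_class a0" "b \<notin> R_class a0"
    using k' ab that unfolding class_constant_def by simp
  ultimately show "(if a \<in> R_class a0 then t else k' a) = (if b \<in> R_class a0 then t else k' b)"
    by auto
qed

lemma class_row_sum_pos:
  assumes "a \<in> Ob" shows "0 < (\<Sum>b\<in>R_class a. \<zeta> a b)"
proof -
  have "a \<in> R_class a" "finite (R_class a)"
    using assms R_refl finite_Ob unfolding R_class_def by auto
  then have "\<zeta> a a \<le> (\<Sum>b\<in>R_class a. \<zeta> a b)" by (intro member_le_sum) auto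
  then show ?thesis using zeta_diag_pos[OF assms] by simp
qed

text \<open>The weighting is extended by a constant \<open>t\<close> on a class of minimal rank; since
  nothing outside that class maps into it, only the rows of the class itself have to be
  corrected, and by \<open>zeta_class_sum\<close> they all require the same \<open>t\<close>.\<close>

lemma weighting_extend:
  assumes S: "R_closed S" and a0: "a0 \<in> S" and a0_min: "\<And>a. a \<in> S \<Longrightarrow> rank a0 \<le> rank a"
    and k': "is_weighting (S - R_class a0) \<zeta> k'" "class_constant (S - R_class a0) k'"
  shows "\<exists>k. is_weighting S \<zeta> k \<and> class_constant S k"
proof -
  define A0 where "A0 = R_class a0"
  define S' where "S' = S - A0"
  have SOb: "S \<subseteq> Ob" and finS: "finite S" and A0S: "A0 \<subseteq> S"
    using S a0 finite_Ob finite_subset unfolding R_closed_def A0_def by auto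
  have a0Ob: "a0 \<in> Ob" using a0 SOb by auto
  define total where "total a = (\<Sum>b\<in>A0. \<zeta> a b)" for a
  have total_pos: "total a0 > 0"
    unfolding total_def A0_def using class_row_sum_pos[OF a0Ob] .
  define t where "t = (1 - (\<Sum>b\<in>S'. of_nat (\<zeta> a0 b) * k' b)) / of_nat (total a0)"
  define k where "k b = (if b \<in> A0 then t else k' b)" for b
  have split: "(\<Sum>b\<in>S. of_nat (\<zeta> a b) * k b)
      = (\<Sum>b\<in>S'. of_nat (\<zeta> a b) * k' b) + of_nat (total a) * t" for a
  proof -
    have "(\<Sum>b\<in>S. of_nat (\<zeta> a b) * k b)
        = (\<Sum>b\<in>S'. of_nat (\<zeta> a b) * k b) + (\<Sum>b\<in>A0. of_nat (\<zeta> a b) * k b)"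
      unfolding S'_def using sum.subset_diff[OF A0S finS] by simp
    then show ?thesis
      unfolding k_def total_def S'_def by (simp add: sum_distrib_right)
  qed
  have "(\<Sum>b\<in>S. of_nat (\<zeta> a b) * k b) = 1" if a: "a \<in> S" for a
  proof (cases "a \<in> A0")
    case False
    then have "total a = 0"
      using zeta_into_minimal_class[OF S a0 a0_min] a unfolding total_def A0_def by simp
    then show ?thesis
      using split[of a] k'(1) a False unfolding is_weighting_def S'_def A0_def by simp
  next
    case True
    have aOb: "a \<in> Ob" using a SOb by auto
    have R: "R a a0" using True R_sym[OF a0Ob aOb] unfolding A0_def R_class_def by simp
    have "total a = total a0"
      using zeta_class_sum[OF aOb a0Ob a0Ob R] unfolding total_def A0_def R_class_def by simp
    moreover have "(\<Sum>b\<in>S'. of_nat (\<zeta> a b) * k' b) = (\<Sum>b\<in>S'. of_nat (\<zeta> a0 b) * k' b)"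
      using row_sum_class_invariant[OF R_closed_diff_class[OF S a0] k'(2) aOb a0Ob R]
      unfolding S'_def A0_def by simp
    moreover have "of_nat (total a0) \<noteq> (0::rat)" using total_pos by simp
    ultimately show ?thesis
      using split[of a] by (simp add: t_def)
  qed
  moreover have "class_constant S k"
    unfolding k_def A0_def using class_constant_extend[OF S a0 k'(2)] .
  ultimately show ?thesis unfolding is_weighting_def by blast
qed

lemma weighting_of_R_closed:
  "R_closed S \<Longrightarrow> \<exists>k. is_weighting S \<zeta> k \<and> class_constant S k"
proof (induction "card S" arbitrary: S rule: less_induct)
  case less
  have SOb: "S \<subseteq> Ob" and finS: "finite S"
    using less.prems finite_Ob finite_subset unfolding R_closed_def by auto
  show ?case
  proof (cases "S = {}")
    case True
    then show ?thesis unfolding is_weighting_def class_constant_def by simp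
  next
    case False
    have "Min (rank ` S) \<in> rank ` S"
      using finS False by (intro Min_in) auto
    then obtain a0 where a0: "a0 \<in> S" "rank a0 = Min (rank ` S)"
      by auto
    have a0_min: "rank a0 \<le> rank a" if "a \<in> S" for a
      using a0(2) finS that by simp
    have a0_class: "a0 \<in> R_class a0"
      using a0(1) SOb R_refl unfolding R_class_def by auto
    have "R_closed (S - R_class a0)"
      using less.prems a0(1) by (rule R_closed_diff_class)
    moreover have "card (S - R_class a0) < card S"
      using finS a0(1) a0_class by (intro psubset_card_mono) auto
    ultimately obtain k' where "is_weighting (S - R_class a0) \<zeta> k'"
      and "class_constant (S - R_class a0) k'"
      using less.hyps by blast
    then show ?thesis
      using weighting_extend[OF less.prems a0(1) a0_min] by blast
  qed
qed

lemma weighting_exists: "\<exists>k. is_weighting Ob \<zeta> k"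
  using weighting_of_R_closed[of Ob] unfolding R_closed_def R_class_def by blast

end

section \<open>Conjugation, transporters, centralizers and double cosets\<close>

context group
begin

lemma mult_inv_cancel_left [simp]: "g \<in> carrier G \<Longrightarrow> z \<in> carrier G \<Longrightarrow> g \<otimes> (inv g \<otimes> z) = z"
  by (simp add: m_assoc [symmetric])

lemma inv_mult_cancel_left [simp]: "g \<in> carrier G \<Longrightarrow> z \<in> carrier G \<Longrightarrow> inv g \<otimes> (g \<otimes> z) = z"
  by (simp add: m_assoc [symmetric])

lemma conj_set_eq_image: "conj_set G H g = (\<lambda>h. inv g \<otimes> h \<otimes> g) ` H"
  unfolding conj_set_def by auto

lemma conj_set_closed: "H \<subseteq> carrier G \<Longrightarrow> g \<in> carrier G \<Longrightarrow> conj_set G H g \<subseteq> carrier G"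
  unfolding conj_set_eq_image by auto

lemma mem_conj_set_iff:
  assumes "H \<subseteq> carrier G" and "g \<in> carrier G" and "x \<in> carrier G"
  shows "x \<in> conj_set G H g \<longleftrightarrow> g \<otimes> x \<otimes> inv g \<in> H"
proof
  assume "x \<in> conj_set G H g"
  then obtain h where "h \<in> H" "x = inv g \<otimes> h \<otimes> g" unfolding conj_set_eq_image by blast
  moreover have "h \<in> carrier G" using \<open>h \<in> H\<close> assms(1) by blast
  ultimately show "g \<otimes> x \<otimes> inv g \<in> H" using assms(2) by (simp add: m_assoc)
next
  assume "g \<otimes> x \<otimes> inv g \<in> H"
  moreover have "x = inv g \<otimes> (g \<otimes> x \<otimes> inv g) \<otimes> g" using assms by (simp add: m_assoc)
  ultimately show "x \<in> conj_set G H g" unfolding conj_set_eq_image by blast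
qed

lemma conj_set_conj_set:
  "H \<subseteq> carrier G \<Longrightarrow> a \<in> carrier G \<Longrightarrow> b \<in> carrier G \<Longrightarrow>
   conj_set G (conj_set G H a) b = conj_set G H (a \<otimes> b)"
  unfolding conj_set_eq_image image_image
  by (intro image_cong refl) (auto simp: inv_mult_group m_assoc)

lemma conj_set_one: "H \<subseteq> carrier G \<Longrightarrow> conj_set G H \<one> = H"
  unfolding conj_set_eq_image by (auto simp: image_iff) (metis l_one r_one subsetD)+

lemma conj_set_inv_cancel: "H \<subseteq> carrier G \<Longrightarrow> g \<in> carrier G \<Longrightarrow> conj_set G (conj_set G H g) (inv g) = H"
  by (simp add: conj_set_conj_set conj_set_one)

lemma conj_set_inv_cancel': "H \<subseteq> carrier G \<Longrightarrow> g \<in> carrier G \<Longrightarrow> conj_set G (conj_set G H (inv g)) g = H"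
  by (simp add: conj_set_conj_set conj_set_one)

lemma inj_on_conjugation: "g \<in> carrier G \<Longrightarrow> inj_on (\<lambda>h. inv g \<otimes> h \<otimes> g) (carrier G)"
  by (intro inj_onI) (metis inv_closed m_closed r_cancel l_cancel)

lemma card_conj_set:
  assumes "H \<subseteq> carrier G" and "g \<in> carrier G" shows "card (conj_set G H g) = card H"
  unfolding conj_set_eq_image
  using inj_on_subset[OF inj_on_conjugation[OF assms(2)] assms(1)] by (rule card_image)

lemma conj_set_eq_if_subset:
  "H \<subseteq> carrier G \<Longrightarrow> g \<in> carrier G \<Longrightarrow> conj_set G H g \<subseteq> K \<Longrightarrow> card K \<le> card H \<Longrightarrow> finite K
   \<Longrightarrow> conj_set G H g = K"
  by (metis card_conj_set card_seteq)

lemma conj_set_mono: "A \<subseteq> B \<Longrightarrow> conj_set G A g \<subseteq> conj_set G B g"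
  unfolding conj_set_eq_image by auto

lemma conj_set_subset_iff:
  "A \<subseteq> carrier G \<Longrightarrow> B \<subseteq> carrier G \<Longrightarrow> g \<in> carrier G \<Longrightarrow>
   conj_set G A g \<subseteq> B \<longleftrightarrow> A \<subseteq> conj_set G B (inv g)"
  by (metis conj_set_inv_cancel conj_set_mono conj_set_closed inv_closed)

lemma conj_set_inject:
  "A \<subseteq> carrier G \<Longrightarrow> B \<subseteq> carrier G \<Longrightarrow> g \<in> carrier G \<Longrightarrow>
   conj_set G A g = conj_set G B g \<longleftrightarrow> A = B"
  by (metis conj_set_inv_cancel)

lemma conj_set_psubset_iff:
  "A \<subseteq> carrier G \<Longrightarrow> B \<subseteq> carrier G \<Longrightarrow> g \<in> carrier G \<Longrightarrow>
   conj_set G A g \<subset> conj_set G B g \<longleftrightarrow> A \<subset> B"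
  by (metis conj_set_inject conj_set_mono conj_set_inv_cancel psubset_eq)

lemma conj_set_Int:
  "A \<subseteq> carrier G \<Longrightarrow> B \<subseteq> carrier G \<Longrightarrow> g \<in> carrier G \<Longrightarrow>
   conj_set G (A \<inter> B) g = conj_set G A g \<inter> conj_set G B g"
  unfolding conj_set_eq_image by (rule inj_on_image_Int[OF inj_on_conjugation])

lemma conjugation_hom: "g \<in> carrier G \<Longrightarrow> group_hom G G (\<lambda>h. inv g \<otimes> h \<otimes> g)"
  unfolding group_hom_def group_hom_axioms_def by (auto simp: is_group hom_def m_assoc)

lemma subgroup_conj_set: "subgroup H G \<Longrightarrow> g \<in> carrier G \<Longrightarrow> subgroup (conj_set G H g) G"
  unfolding conj_set_eq_image by (rule group_hom.subgroup_img_is_subgroup[OF conjugation_hom])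

lemma conj_set_trivial: "g \<in> carrier G \<Longrightarrow> conj_set G {\<one>} g = {\<one>}"
  unfolding conj_set_eq_image by auto

lemma conj_set_of_member: assumes "subgroup K G" and "k \<in> K" shows "conj_set G K k = K"
proof -
  have sub: "conj_set G K c \<subseteq> K" if "c \<in> K" for c
    using that assms(1) unfolding conj_set_eq_image by (auto simp: subgroup.m_closed subgroup.m_inv_closed)
  have K: "K \<subseteq> carrier G" and k: "k \<in> carrier G"
    using assms subgroup.subset by blast+
  have "K = conj_set G (conj_set G K (inv k)) k"
    using conj_set_inv_cancel'[OF K k] by simp
  also have "\<dots> \<subseteq> conj_set G K k"
    using sub[of "inv k"] assms by (intro conj_set_mono) (simp add: subgroup.m_inv_closed)
  finally show ?thesis using sub[OF assms(2)] by blast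
qed

lemma conj_set_commute_iff:
  assumes "a \<in> carrier G" "b \<in> carrier G" "x \<in> carrier G"
  shows "(x \<otimes> a \<otimes> inv x) \<otimes> (x \<otimes> b \<otimes> inv x) = (x \<otimes> b \<otimes> inv x) \<otimes> (x \<otimes> a \<otimes> inv x)
    \<longleftrightarrow> a \<otimes> b = b \<otimes> a"
proof -
  have "(x \<otimes> a \<otimes> inv x) \<otimes> (x \<otimes> b \<otimes> inv x) = x \<otimes> (a \<otimes> b) \<otimes> inv x"
    "(x \<otimes> b \<otimes> inv x) \<otimes> (x \<otimes> a \<otimes> inv x) = x \<otimes> (b \<otimes> a) \<otimes> inv x"
    using assms by (simp_all add: m_assoc)
  moreover have "x \<otimes> (a \<otimes> b) \<otimes> inv x = x \<otimes> (b \<otimes> a) \<otimes> inv x \<longleftrightarrow> a \<otimes> b = b \<otimes> a"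
    using assms by (metis inv_closed l_cancel m_closed r_cancel)
  ultimately show ?thesis by simp
qed

lemma transporter_subset: "transporter G H K \<subseteq> carrier G"
  unfolding transporter_def by auto

lemma one_in_transporter: "H \<subseteq> carrier G \<Longrightarrow> \<one> \<in> transporter G H H"
  unfolding transporter_def using conj_set_one by auto

lemma transporter_conj_set:
  assumes H: "H \<subseteq> carrier G" and K: "K \<subseteq> carrier G" and x: "x \<in> carrier G"
  shows "transporter G (conj_set G H x) (conj_set G K x) = conj_set G (transporter G H K) x"
proof (rule Set.set_eqI)
  fix g
  show "g \<in> transporter G (conj_set G H x) (conj_set G K x) \<longleftrightarrow> g \<in> conj_set G (transporter G H K) x"
  proof (cases "g \<in> carrier G")
    case False
    then show ?thesis
      using conj_set_closed[OF transporter_subset x] unfolding transporter_def by auto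
  next
    case g: True
    have "g \<in> transporter G (conj_set G H x) (conj_set G K x)
        \<longleftrightarrow> conj_set G H (x \<otimes> g) \<subseteq> conj_set G K x"
      unfolding transporter_def using g H x by (simp add: conj_set_conj_set)
    also have "\<dots> \<longleftrightarrow> conj_set G H (x \<otimes> g \<otimes> inv x) \<subseteq> K"
      using conj_set_subset_iff[of "conj_set G H (x \<otimes> g)" K "inv x"] H K x g
      by (simp add: conj_set_conj_set conj_set_closed)
    also have "\<dots> \<longleftrightarrow> g \<in> conj_set G (transporter G H K) x"
      using mem_conj_set_iff[OF transporter_subset x g] x g unfolding transporter_def by simp
    finally show ?thesis .
  qed
qed

lemma card_transporter_conj_set:
  "H \<subseteq> carrier G \<Longrightarrow> K \<subseteq> carrier G \<Longrightarrow> x \<in> carrier G \<Longrightarrow>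
   card (transporter G (conj_set G H x) (conj_set G K x)) = card (transporter G H K)"
  by (simp add: transporter_conj_set card_conj_set transporter_subset)

lemma transporter_mult_right:
  assumes "subgroup K G" and "g \<in> transporter G H K" and "k \<in> K" and "H \<subseteq> carrier G"
  shows "g \<otimes> k \<in> transporter G H K"
proof -
  have g: "g \<in> carrier G" and k: "k \<in> carrier G"
    using assms transporter_subset subgroup.subset by blast+
  have "conj_set G H (g \<otimes> k) = conj_set G (conj_set G H g) k"
    using conj_set_conj_set[OF assms(4) g k] by simp
  also have "\<dots> \<subseteq> conj_set G K k"
    using assms(2) unfolding transporter_def by (intro conj_set_mono) auto
  also have "\<dots> = K" using conj_set_of_member[OF assms(1,3)] .
  finally show ?thesis unfolding transporter_def using g k by simp
qed

lemma centralizer_subset: "centralizer_of G H \<subseteq> carrier G"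
  unfolding centralizer_of_def by auto

lemma subgroup_centralizer:
  assumes H: "H \<subseteq> carrier G" shows "subgroup (centralizer_of G H) G"
proof (rule subgroupI)
  show "centralizer_of G H \<subseteq> carrier G" by (rule centralizer_subset)
  show "centralizer_of G H \<noteq> {}"
    using H unfolding centralizer_of_def by force
  fix a assume a: "a \<in> centralizer_of G H"
  have ac: "a \<in> carrier G" using a centralizer_subset by auto
  show "inv a \<in> centralizer_of G H"
    unfolding centralizer_of_def
  proof (intro CollectI conjI ballI)
    fix h assume h: "h \<in> H"
    then have hc: "h \<in> carrier G" and "a \<otimes> h = h \<otimes> a"
      using H a unfolding centralizer_of_def by auto
    then have "inv a \<otimes> (a \<otimes> h) \<otimes> inv a = inv a \<otimes> (h \<otimes> a) \<otimes> inv a" by simp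
    then show "inv a \<otimes> h = h \<otimes> inv a" using ac hc by (simp add: m_assoc)
  qed (use ac in simp)
  fix b assume b: "b \<in> centralizer_of G H"
  show "a \<otimes> b \<in> centralizer_of G H"
    unfolding centralizer_of_def
  proof (intro CollectI conjI ballI)
    have bc: "b \<in> carrier G" using b centralizer_subset by auto
    then show "a \<otimes> b \<in> carrier G" using ac by simp
    fix h assume h: "h \<in> H"
    then have hc: "h \<in> carrier G" and "a \<otimes> h = h \<otimes> a" "b \<otimes> h = h \<otimes> b"
      using H a b unfolding centralizer_of_def by auto
    then show "a \<otimes> b \<otimes> h = h \<otimes> (a \<otimes> b)"
      using ac bc by (metis m_assoc)
  qed
qed

lemma centralizer_conj_set:
  assumes H: "H \<subseteq> carrier G" and x: "x \<in> carrier G"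
  shows "centralizer_of G (conj_set G H x) = conj_set G (centralizer_of G H) x"
proof (rule Set.set_eqI)
  fix g
  show "g \<in> centralizer_of G (conj_set G H x) \<longleftrightarrow> g \<in> conj_set G (centralizer_of G H) x"
  proof (cases "g \<in> carrier G")
    case False
    then show ?thesis
      using conj_set_closed[OF centralizer_subset x] unfolding centralizer_of_def by auto
  next
    case g: True
    have "g \<in> centralizer_of G (conj_set G H x)
        \<longleftrightarrow> (\<forall>h\<in>H. g \<otimes> (inv x \<otimes> h \<otimes> x) = (inv x \<otimes> h \<otimes> x) \<otimes> g)"
      unfolding centralizer_of_def conj_set_eq_image using g by auto
    also have "\<dots> \<longleftrightarrow> (\<forall>h\<in>H. (x \<otimes> g \<otimes> inv x) \<otimes> h = h \<otimes> (x \<otimes> g \<otimes> inv x))"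
    proof (intro ball_cong refl)
      fix h assume "h \<in> H"
      then have h: "h \<in> carrier G" using H by auto
      have "x \<otimes> (inv x \<otimes> h \<otimes> x) \<otimes> inv x = h" using h x by (simp add: m_assoc)
      then show "g \<otimes> (inv x \<otimes> h \<otimes> x) = (inv x \<otimes> h \<otimes> x) \<otimes> g
          \<longleftrightarrow> (x \<otimes> g \<otimes> inv x) \<otimes> h = h \<otimes> (x \<otimes> g \<otimes> inv x)"
        using conj_set_commute_iff[of g "inv x \<otimes> h \<otimes> x" x] g h x by simp
    qed
    also have "\<dots> \<longleftrightarrow> g \<in> conj_set G (centralizer_of G H) x"
      using mem_conj_set_iff[OF centralizer_subset x g] g x unfolding centralizer_of_def by auto
    finally show ?thesis .
  qed
qed

lemma conj_set_by_centralizer: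
  assumes H: "H \<subseteq> carrier G" and c: "c \<in> centralizer_of G H"
  shows "conj_set G H c = H"
proof -
  have cc: "c \<in> carrier G" using c centralizer_subset by auto
  have "inv c \<otimes> h \<otimes> c = h" if "h \<in> H" for h
  proof -
    have "h \<in> carrier G" "c \<otimes> h = h \<otimes> c" using that H c unfolding centralizer_of_def by auto
    then show ?thesis using cc by (metis m_assoc inv_mult_cancel_left inv_closed)
  qed
  then show ?thesis unfolding conj_set_eq_image by simp
qed

lemma transporter_mult_left:
  assumes H: "H \<subseteq> carrier G" and c: "c \<in> centralizer_of G H" and g: "g \<in> transporter G H K"
  shows "c \<otimes> g \<in> transporter G H K"
proof -
  have cc: "c \<in> carrier G" and gc: "g \<in> carrier G"
    using c g centralizer_subset transporter_subset by blast+
  have "conj_set G H (c \<otimes> g) = conj_set G H g"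
    using conj_set_conj_set[OF H cc gc] conj_set_by_centralizer[OF H c] by simp
  then show ?thesis using g cc gc unfolding transporter_def by auto
qed

definition p_power_index_normals :: "nat \<Rightarrow> 'a set \<Rightarrow> 'a set set" where
  "p_power_index_normals p Y = {N. subgroup N G \<and> N \<subseteq> Y \<and>
       (\<forall>x\<in>Y. \<forall>n\<in>N. x \<otimes> n \<otimes> inv x \<in> N) \<and>
       is_p_power p (card Y div card N) \<and> card N dvd card Y}"

lemma Op_eq_Inter: "Op G p Y = \<Inter> (p_power_index_normals p Y)"
  unfolding Op_def p_power_index_normals_def by simp

lemma self_in_p_power_index_normals:
  assumes "subgroup Y G" and "finite Y"
  shows "Y \<in> p_power_index_normals p Y"
proof -
  have "card Y > 0"
    using assms subgroup.one_closed card_gt_0_iff by blast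
  then have "card Y div card Y = p ^ 0" by simp
  then have "is_p_power p (card Y div card Y)" unfolding is_p_power_def by blast
  then show ?thesis
    unfolding p_power_index_normals_def using assms
    by (auto simp: subgroup.m_closed subgroup.m_inv_closed)
qed

lemma subgroup_Op: assumes "subgroup Y G" and "finite Y" shows "subgroup (Op G p Y) G"
  unfolding Op_eq_Inter
  by (rule subgroups_Inter)
    (use self_in_p_power_index_normals[OF assms, of p] in \<open>auto simp: p_power_index_normals_def\<close>)

lemma Op_subset: "subgroup Y G \<Longrightarrow> finite Y \<Longrightarrow> Op G p Y \<subseteq> Y"
  unfolding Op_eq_Inter using self_in_p_power_index_normals by blast

lemma conj_set_in_p_power_index_normals:
  assumes Y: "subgroup Y G" and N: "N \<in> p_power_index_normals p Y" and x: "x \<in> carrier G"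
  shows "conj_set G N x \<in> p_power_index_normals p (conj_set G Y x)"
proof -
  define f where "f h = inv x \<otimes> h \<otimes> x" for h
  have hom: "group_hom G G f" unfolding f_def by (rule conjugation_hom[OF x])
  have Ysub: "Y \<subseteq> carrier G" using Y subgroup.subset by blast
  have Nsg: "subgroup N G" and NY: "N \<subseteq> Y" and nor: "\<forall>y\<in>Y. \<forall>n\<in>N. y \<otimes> n \<otimes> inv y \<in> N"
    and pp: "is_p_power p (card Y div card N)" and dv: "card N dvd card Y"
    using N unfolding p_power_index_normals_def by auto
  have card_eqs: "card (conj_set G Y x) = card Y" "card (conj_set G N x) = card N"
    using card_conj_set Ysub NY x by auto
  have "y \<otimes> n \<otimes> inv y \<in> conj_set G N x"
    if y: "y \<in> conj_set G Y x" and n: "n \<in> conj_set G N x" for y n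
  proof -
    obtain y0 n0 where y0: "y0 \<in> Y" "y = f y0" and n0: "n0 \<in> N" "n = f n0"
      using y n unfolding conj_set_eq_image f_def by auto
    have "y0 \<in> carrier G" "n0 \<in> carrier G" using y0 n0 Ysub NY by auto
    then have "y \<otimes> n \<otimes> inv y = f (y0 \<otimes> n0 \<otimes> inv y0)"
      using y0 n0 group_hom.hom_mult[OF hom] group_hom.hom_inv[OF hom] by simp
    moreover have "y0 \<otimes> n0 \<otimes> inv y0 \<in> N" using nor y0 n0 by blast
    ultimately show ?thesis unfolding conj_set_eq_image f_def by blast
  qed
  then show ?thesis
    unfolding p_power_index_normals_def
    using subgroup_conj_set[OF Nsg x] conj_set_mono[OF NY] card_eqs pp dv by simp
qed

lemma p_power_index_normals_conj_set:
  assumes Y: "subgroup Y G" and x: "x \<in> carrier G"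
  shows "p_power_index_normals p (conj_set G Y x) = (\<lambda>N. conj_set G N x) ` p_power_index_normals p Y"
proof
  show "(\<lambda>N. conj_set G N x) ` p_power_index_normals p Y \<subseteq> p_power_index_normals p (conj_set G Y x)"
    using conj_set_in_p_power_index_normals[OF Y _ x] by blast
  show "p_power_index_normals p (conj_set G Y x) \<subseteq> (\<lambda>N. conj_set G N x) ` p_power_index_normals p Y"
  proof
    fix M assume M: "M \<in> p_power_index_normals p (conj_set G Y x)"
    have Ysub: "Y \<subseteq> carrier G" using Y subgroup.subset by blast
    have "conj_set G M (inv x) \<in> p_power_index_normals p (conj_set G (conj_set G Y x) (inv x))"
      using conj_set_in_p_power_index_normals[OF subgroup_conj_set[OF Y x] M] x by simp
    then have "conj_set G M (inv x) \<in> p_power_index_normals p Y"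
      using conj_set_inv_cancel[OF Ysub x] by simp
    moreover have "M \<subseteq> carrier G"
      using M subgroup.subset unfolding p_power_index_normals_def by blast
    then have "M = conj_set G (conj_set G M (inv x)) x" using conj_set_inv_cancel' x by simp
    ultimately show "M \<in> (\<lambda>N. conj_set G N x) ` p_power_index_normals p Y" by blast
  qed
qed

lemma Op_conj_set:
  assumes Y: "subgroup Y G" "finite Y" and x: "x \<in> carrier G"
  shows "Op G p (conj_set G Y x) = conj_set G (Op G p Y) x"
proof -
  define f where "f h = inv x \<otimes> h \<otimes> x" for h
  have "\<forall>N\<in>p_power_index_normals p Y. N \<subseteq> carrier G"
    unfolding p_power_index_normals_def using subgroup.subset by blast
  then have "f ` \<Inter> (p_power_index_normals p Y) = (\<Inter>N\<in>p_power_index_normals p Y. f ` N)"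
    using image_INT[OF inj_on_conjugation[OF x], where B = "\<lambda>N. N"]
      self_in_p_power_index_normals[OF Y, of p] unfolding f_def by simp
  also have "\<dots> = \<Inter> (p_power_index_normals p (conj_set G Y x))"
    using p_power_index_normals_conj_set[OF Y(1) x]
    unfolding f_def conj_set_eq_image by (simp add: image_image)
  finally show ?thesis
    unfolding Op_eq_Inter f_def conj_set_eq_image by simp
qed

definition double_coset :: "'a set \<Rightarrow> 'a set \<Rightarrow> 'a \<Rightarrow> 'a set" where
  "double_coset A B g = {a \<otimes> g \<otimes> b | a b. a \<in> A \<and> b \<in> B}"

lemma double_coset_trivial_right:
  assumes "A \<subseteq> carrier G" and "g \<in> carrier G" shows "double_coset A {\<one>} g = A #> g"
proof -
  have "double_coset A {\<one>} g = (\<lambda>a. a \<otimes> g \<otimes> \<one>) ` A"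
    unfolding double_coset_def by auto
  also have "\<dots> = (\<lambda>a. a \<otimes> g) ` A"
    using assms by (intro image_cong) auto
  finally show ?thesis unfolding r_coset_def by auto
qed

lemma double_coset_trivial_left:
  assumes "B \<subseteq> carrier G" and "g \<in> carrier G" shows "double_coset {\<one>} B g = g <# B"
proof -
  have "double_coset {\<one>} B g = (\<lambda>b. \<one> \<otimes> g \<otimes> b) ` B"
    unfolding double_coset_def by auto
  also have "\<dots> = (\<lambda>b. g \<otimes> b) ` B"
    using assms by (intro image_cong) auto
  finally show ?thesis unfolding l_coset_def by auto
qed

context
  fixes A B assumes A: "subgroup A G" and B: "subgroup B G"
begin

lemma self_in_double_coset: "g \<in> carrier G \<Longrightarrow> g \<in> double_coset A B g"
  unfolding double_coset_def using subgroup.one_closed[OF A] subgroup.one_closed[OF B]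
  by (auto intro!: exI[of _ \<one>])

lemma double_coset_mono:
  assumes g: "g \<in> carrier G" and y: "y \<in> double_coset A B g"
  shows "double_coset A B y \<subseteq> double_coset A B g"
proof
  obtain a0 b0 where y0: "y = a0 \<otimes> g \<otimes> b0" "a0 \<in> A" "b0 \<in> B"
    using y unfolding double_coset_def by auto
  fix z assume "z \<in> double_coset A B y"
  then obtain a b where z: "z = a \<otimes> y \<otimes> b" "a \<in> A" "b \<in> B"
    unfolding double_coset_def by auto
  have "a \<in> carrier G" "a0 \<in> carrier G" "b \<in> carrier G" "b0 \<in> carrier G"
    using z y0 A B subgroup.subset by blast+
  then have "z = (a \<otimes> a0) \<otimes> g \<otimes> (b0 \<otimes> b)" using z y0 g by (simp add: m_assoc)
  moreover have "a \<otimes> a0 \<in> A" "b0 \<otimes> b \<in> B"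
    using z y0 subgroup.m_closed[OF A] subgroup.m_closed[OF B] by blast+
  ultimately show "z \<in> double_coset A B g" unfolding double_coset_def by blast
qed

lemma double_coset_eq:
  assumes g: "g \<in> carrier G" and y: "y \<in> double_coset A B g"
  shows "double_coset A B y = double_coset A B g"
proof
  show "double_coset A B y \<subseteq> double_coset A B g" using double_coset_mono[OF g y] .
  obtain a0 b0 where y0: "y = a0 \<otimes> g \<otimes> b0" "a0 \<in> A" "b0 \<in> B"
    using y unfolding double_coset_def by auto
  have a0: "a0 \<in> carrier G" and b0: "b0 \<in> carrier G"
    using y0 A B subgroup.subset by blast+
  have "g = inv a0 \<otimes> y \<otimes> inv b0" using y0 a0 b0 g by (simp add: m_assoc)
  moreover have "inv a0 \<in> A" "inv b0 \<in> B"
    using y0 subgroup.m_inv_closed[OF A] subgroup.m_inv_closed[OF B] by blast+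
  ultimately have "g \<in> double_coset A B y" unfolding double_coset_def by blast
  then show "double_coset A B g \<subseteq> double_coset A B y"
    using double_coset_mono y0 a0 b0 g by simp
qed

lemma double_coset_stabilizer_conj:
  assumes g: "g \<in> carrier G" and y: "y \<in> double_coset A B g"
  shows "\<exists>b\<in>B. B \<inter> conj_set G A y = conj_set G (B \<inter> conj_set G A g) b"
proof -
  obtain a0 b0 where y0: "y = a0 \<otimes> g \<otimes> b0" "a0 \<in> A" "b0 \<in> B"
    using y unfolding double_coset_def by auto
  have As: "A \<subseteq> carrier G" and Bs: "B \<subseteq> carrier G"
    using A B subgroup.subset by blast+
  have a0: "a0 \<in> carrier G" and b0: "b0 \<in> carrier G" using y0 As Bs by auto
  have "conj_set G A y = conj_set G (conj_set G (conj_set G A a0) g) b0"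
    using y0 a0 b0 g As by (simp add: conj_set_conj_set conj_set_closed)
  also have "\<dots> = conj_set G (conj_set G A g) b0"
    using conj_set_of_member[OF A y0(2)] by simp
  finally have "B \<inter> conj_set G A y = conj_set G B b0 \<inter> conj_set G (conj_set G A g) b0"
    using conj_set_of_member[OF B y0(3)] by simp
  also have "\<dots> = conj_set G (B \<inter> conj_set G A g) b0"
    using conj_set_Int[OF Bs conj_set_closed[OF As g] b0] by simp
  finally show ?thesis using y0(3) by blast
qed

lemma double_coset_fiber_eq_image:
  assumes g: "g \<in> carrier G" and a0: "a0 \<in> A" and b0: "b0 \<in> B"
  shows "{ab \<in> A \<times> B. fst ab \<otimes> g \<otimes> snd ab = a0 \<otimes> g \<otimes> b0}
    = (\<lambda>z. (a0 \<otimes> (g \<otimes> inv z \<otimes> inv g), z \<otimes> b0)) ` (B \<inter> conj_set G A g)"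
    (is "?F = ?f ` ?Z")
proof
  have As: "A \<subseteq> carrier G" and Bs: "B \<subseteq> carrier G"
    using A B subgroup.subset by blast+
  have a0c: "a0 \<in> carrier G" and b0c: "b0 \<in> carrier G" using a0 b0 As Bs by auto
  have Z_iff: "z \<in> ?Z \<longleftrightarrow> z \<in> B \<and> g \<otimes> z \<otimes> inv g \<in> A" for z
    using mem_conj_set_iff[OF As g] Bs by blast
  show "?f ` ?Z \<subseteq> ?F"
  proof
    fix w assume "w \<in> ?f ` ?Z"
    then obtain z where z: "z \<in> B" "g \<otimes> z \<otimes> inv g \<in> A" "w = ?f z" using Z_iff by auto
    have zc: "z \<in> carrier G" using z Bs by auto
    have "g \<otimes> inv z \<otimes> inv g = inv (g \<otimes> z \<otimes> inv g)"
      using g zc by (simp add: inv_mult_group m_assoc)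
    then have "a0 \<otimes> (g \<otimes> inv z \<otimes> inv g) \<in> A"
      using z(2) a0 subgroup.m_closed[OF A] subgroup.m_inv_closed[OF A] by simp
    moreover have "z \<otimes> b0 \<in> B" using z(1) b0 subgroup.m_closed[OF B] by blast
    moreover have "a0 \<otimes> (g \<otimes> inv z \<otimes> inv g) \<otimes> g \<otimes> (z \<otimes> b0) = a0 \<otimes> g \<otimes> b0"
      using a0c g zc b0c by (simp add: m_assoc)
    ultimately show "w \<in> ?F" using z(3) by simp
  qed
  show "?F \<subseteq> ?f ` ?Z"
  proof
    fix ab assume "ab \<in> ?F"
    then obtain a b where ab: "ab = (a, b)" "a \<in> A" "b \<in> B" "a \<otimes> g \<otimes> b = a0 \<otimes> g \<otimes> b0"
      by auto
    have ac: "a \<in> carrier G" and bc: "b \<in> carrier G" using ab As Bs by auto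
    define z where "z = b \<otimes> inv b0"
    have "g \<otimes> z \<otimes> inv g = inv a \<otimes> (a \<otimes> g \<otimes> b) \<otimes> inv b0 \<otimes> inv g"
      unfolding z_def using ac g bc b0c by (simp add: m_assoc)
    also have "\<dots> = inv a \<otimes> a0" using ab(4) ac g a0c b0c by (simp add: m_assoc)
    finally have conj_z: "g \<otimes> z \<otimes> inv g = inv a \<otimes> a0" .
    have "z \<in> B"
      unfolding z_def using ab(3) b0 subgroup.m_closed[OF B] subgroup.m_inv_closed[OF B] by blast
    moreover have "g \<otimes> z \<otimes> inv g \<in> A"
      unfolding conj_z using ab(2) a0 subgroup.m_closed[OF A] subgroup.m_inv_closed[OF A] by blast
    ultimately have "z \<in> ?Z" using Z_iff by blast
    moreover have "g \<otimes> inv z \<otimes> inv g = inv (g \<otimes> z \<otimes> inv g)"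
      unfolding z_def using g bc b0c by (simp add: inv_mult_group m_assoc)
    then have "?f z = ab"
      unfolding conj_z using ab(1) ac a0c bc b0c by (simp add: inv_mult_group m_assoc z_def)
    ultimately show "ab \<in> ?f ` ?Z" by blast
  qed
qed

lemma card_double_coset_fiber:
  assumes g: "g \<in> carrier G" and y: "y \<in> double_coset A B g"
  shows "card {ab \<in> A \<times> B. fst ab \<otimes> g \<otimes> snd ab = y} = card (B \<inter> conj_set G A g)"
proof -
  obtain a0 b0 where y0: "y = a0 \<otimes> g \<otimes> b0" "a0 \<in> A" "b0 \<in> B"
    using y unfolding double_coset_def by auto
  have "inj_on (\<lambda>z. (a0 \<otimes> (g \<otimes> inv z \<otimes> inv g), z \<otimes> b0)) (B \<inter> conj_set G A g)"
  proof (rule inj_onI)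
    fix z z' assume "z \<in> B \<inter> conj_set G A g" "z' \<in> B \<inter> conj_set G A g"
      and "(a0 \<otimes> (g \<otimes> inv z \<otimes> inv g), z \<otimes> b0) = (a0 \<otimes> (g \<otimes> inv z' \<otimes> inv g), z' \<otimes> b0)"
    moreover have "z \<in> carrier G" "z' \<in> carrier G" "b0 \<in> carrier G"
      using calculation(1,2) y0(3) subgroup.subset[OF B] by auto
    ultimately show "z = z'" by simp
  qed
  then show ?thesis
    unfolding y0(1) double_coset_fiber_eq_image[OF g y0(2,3)] by (rule card_image)
qed

end

end

section \<open>Counting in finite groups\<close>

locale finite_group = group +
  assumes finite_carrier: "finite (carrier G)"
begin

lemma finite_subset_carrier: "A \<subseteq> carrier G \<Longrightarrow> finite A"
  using finite_carrier finite_subset by blast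

lemma card_subgroup_pos: "subgroup H G \<Longrightarrow> 0 < card H"
  using finite_subset_carrier subgroup.subset subgroup.one_closed card_gt_0_iff by blast

lemma card_carrier_pos: "0 < card (carrier G)"
  using card_subgroup_pos subgroup_self by blast

lemma card_transporter_self_pos: "H \<subseteq> carrier G \<Longrightarrow> 0 < card (transporter G H H)"
  using one_in_transporter finite_subset_carrier[OF transporter_subset] card_gt_0_iff by blast

context
  fixes A B assumes A: "subgroup A G" and B: "subgroup B G"
begin

lemma card_double_coset:
  assumes g: "g \<in> carrier G"
  shows "card (double_coset A B g) * card (B \<inter> conj_set G A g) = card A * card B"
proof -
  define mult where "mult ab = fst ab \<otimes> g \<otimes> snd ab" for ab :: "'a \<times> 'a"
  have fin: "finite (A \<times> B)"
    using A B subgroup.subset finite_subset_carrier by blast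
  have img: "mult ` (A \<times> B) = double_coset A B g"
    unfolding mult_def double_coset_def by force
  have "card A * card B = card (A \<times> B)" by (simp add: card_cartesian_product)
  also have "\<dots> = (\<Sum>y\<in>mult ` (A \<times> B). card {ab \<in> A \<times> B. mult ab = y})"
    using sum.image_gen[OF fin, of "\<lambda>_. 1" mult] by (simp only: card_eq_sum)
  also have "\<dots> = (\<Sum>y\<in>double_coset A B g. card (B \<inter> conj_set G A g))"
    unfolding img mult_def using card_double_coset_fiber[OF A B g] by simp
  finally show ?thesis by simp
qed

lemma card_double_coset_image:
  assumes T: "T \<subseteq> carrier G"
    and left: "\<And>a t. a \<in> A \<Longrightarrow> t \<in> T \<Longrightarrow> a \<otimes> t \<in> T"
    and right: "\<And>t b. t \<in> T \<Longrightarrow> b \<in> B \<Longrightarrow> t \<otimes> b \<in> T"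
  shows "card (double_coset A B ` T) * (card A * card B) = (\<Sum>g\<in>T. card (B \<inter> conj_set G A g))"
proof -
  have "(\<Sum>g\<in>T. card (B \<inter> conj_set G A g))
      = (\<Sum>D\<in>double_coset A B ` T. \<Sum>g\<in>{g\<in>T. double_coset A B g = D}. card (B \<inter> conj_set G A g))"
    by (rule sum.image_gen[OF finite_subset_carrier[OF T]])
  also have "\<dots> = (\<Sum>D\<in>double_coset A B ` T. card A * card B)"
  proof (rule sum.cong[OF refl])
    fix D assume "D \<in> double_coset A B ` T"
    then obtain t where t: "t \<in> T" "D = double_coset A B t" by auto
    have tc: "t \<in> carrier G" using t T by auto
    have DT: "double_coset A B t \<subseteq> T"
      unfolding double_coset_def using t left right A B subgroup.subset by blast
    have fiber: "{g\<in>T. double_coset A B g = D} = D"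
      using t T DT self_in_double_coset[OF A B] double_coset_eq[OF A B tc] by blast
    have "card (B \<inter> conj_set G A y) = card (B \<inter> conj_set G A t)" if y: "y \<in> D" for y
    proof -
      obtain b where "b \<in> B" "B \<inter> conj_set G A y = conj_set G (B \<inter> conj_set G A t) b"
        using double_coset_stabilizer_conj[OF A B tc] y t(2) by blast
      moreover have "B \<inter> conj_set G A t \<subseteq> carrier G" using subgroup.subset[OF B] by blast
      ultimately show ?thesis using card_conj_set subgroup.subset[OF B] by auto
    qed
    then have "(\<Sum>g\<in>D. card (B \<inter> conj_set G A g)) = card D * card (B \<inter> conj_set G A t)"
      by simp
    also have "\<dots> = card A * card B" using card_double_coset[OF tc] t by simp
    finally show "(\<Sum>g\<in>{g\<in>T. double_coset A B g = D}. card (B \<inter> conj_set G A g)) = card A * card B"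
      using fiber by simp
  qed
  finally show ?thesis by simp
qed

end

lemma card_right_coset_image:
  assumes A: "subgroup A G" and T: "T \<subseteq> carrier G"
    and left: "\<And>a t. a \<in> A \<Longrightarrow> t \<in> T \<Longrightarrow> a \<otimes> t \<in> T"
  shows "card ((\<lambda>g. A #> g) ` T) * card A = card T"
proof -
  have As: "A \<subseteq> carrier G" using A subgroup.subset by blast
  have "(\<lambda>g. A #> g) ` T = double_coset A {\<one>} ` T"
    using T As double_coset_trivial_right by (intro image_cong) auto
  moreover have "{\<one>} \<inter> conj_set G A g = {\<one>}" if "g \<in> T" for g
    using that T subgroup_conj_set[OF A] subgroup.one_closed by blast
  moreover have "t \<otimes> b \<in> T" if "t \<in> T" "b \<in> {\<one>}" for t b
    using that T by auto
  ultimately show ?thesis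
    using card_double_coset_image[OF A triv_subgroup T left] by simp
qed

lemma card_left_coset_image:
  assumes B: "subgroup B G" and T: "T \<subseteq> carrier G"
    and right: "\<And>t b. t \<in> T \<Longrightarrow> b \<in> B \<Longrightarrow> t \<otimes> b \<in> T"
  shows "card ((\<lambda>g. g <# B) ` T) * card B = card T"
proof -
  have Bs: "B \<subseteq> carrier G" using B subgroup.subset by blast
  have "(\<lambda>g. g <# B) ` T = double_coset {\<one>} B ` T"
    using T Bs double_coset_trivial_left by (intro image_cong) auto
  moreover have "B \<inter> conj_set G {\<one>} g = {\<one>}" if "g \<in> T" for g
    using that T conj_set_trivial subgroup.one_closed[OF B] by auto
  moreover have "a \<otimes> t \<in> T" if "a \<in> {\<one>}" "t \<in> T" for a t
    using that T by auto
  ultimately show ?thesis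
    using card_double_coset_image[OF triv_subgroup B T _ right] by simp
qed

lemma card_subgroup_dvd: "subgroup L G \<Longrightarrow> subgroup K G \<Longrightarrow> L \<subseteq> K \<Longrightarrow> card L dvd card K"
  using card_right_coset_image[of L K] subgroup.subset subgroup.m_closed
  by (metis dvd_triv_right subsetD)

lemma card_conj_class_mult_normalizer:
  assumes H: "H \<subseteq> carrier G"
  shows "card (conj_class G H) * card (transporter G H H) = card (carrier G)"
proof -
  have fiber: "{g \<in> carrier G. conj_set G H g = conj_set G H y} = transporter G H H #> y"
    if y: "y \<in> carrier G" for y
  proof (rule Set.set_eqI)
    fix g
    show "g \<in> {g \<in> carrier G. conj_set G H g = conj_set G H y} \<longleftrightarrow> g \<in> transporter G H H #> y"
    proof (cases "g \<in> carrier G")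
      case False
      then show ?thesis using r_coset_subset_G[OF transporter_subset y] by auto
    next
      case g: True
      have "g \<in> transporter G H H #> y \<longleftrightarrow> (\<exists>n\<in>transporter G H H. g = n \<otimes> y)"
        unfolding r_coset_def by auto
      also have "\<dots> \<longleftrightarrow> g \<otimes> inv y \<in> transporter G H H"
        using y g transporter_subset by (metis inv_solve_right m_closed inv_closed subsetD)
      also have "\<dots> \<longleftrightarrow> conj_set G H g \<subseteq> conj_set G H y"
        using conj_set_subset_iff[of "conj_set G H g" H "inv y"] H g y
        unfolding transporter_def by (simp add: conj_set_conj_set conj_set_closed)
      also have "\<dots> \<longleftrightarrow> conj_set G H g = conj_set G H y"
        using conj_set_eq_if_subset[OF H g, of "conj_set G H y"] H y
          finite_subset_carrier[OF conj_set_closed[OF H y]] by (auto simp: card_conj_set)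
      finally show ?thesis using g by auto
    qed
  qed
  have "card (carrier G) = (\<Sum>S\<in>(\<lambda>g. conj_set G H g) ` carrier G. card {g \<in> carrier G. conj_set G H g = S})"
    using sum.image_gen[OF finite_carrier, of "\<lambda>_. 1" "\<lambda>g. conj_set G H g"] by (simp only: card_eq_sum)
  also have "\<dots> = (\<Sum>S\<in>(\<lambda>g. conj_set G H g) ` carrier G. card (transporter G H H))"
    using fiber card_rcosets_equal[OF rcosetsI transporter_subset] transporter_subset
    by (intro sum.cong refl) auto
  also have "\<dots> = card (conj_class G H) * card (transporter G H H)"
    unfolding conj_class_def by (simp add: setcompr_eq_image)
  finally show ?thesis by simp
qed

lemma card_homF:
  assumes "H \<subseteq> carrier G"
  shows "card (homF G H K) * card (centralizer_of G H) = card (transporter G H K)"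
  unfolding homF_def
  using card_right_coset_image[OF subgroup_centralizer[OF assms] transporter_subset]
    transporter_mult_left[OF assms] by blast

lemma card_homL:
  assumes "H \<subseteq> carrier G"
  shows "card (homL G p H K) * card (Op G p (centralizer_of G H)) = card (transporter G H K)"
proof -
  have C: "subgroup (centralizer_of G H) G" "finite (centralizer_of G H)"
    using subgroup_centralizer[OF assms] finite_subset_carrier[OF centralizer_subset] by auto
  show ?thesis
    unfolding homL_def
    using card_right_coset_image[OF subgroup_Op[OF C] transporter_subset]
      transporter_mult_left[OF assms] Op_subset[OF C] by blast
qed

lemma card_homO:
  assumes "subgroup K G" and "H \<subseteq> carrier G"
  shows "card (homO G H K) * card K = card (transporter G H K)"
  unfolding homO_def
  using card_left_coset_image[OF assms(1) transporter_subset]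
    transporter_mult_right[OF assms(1) _ _ assms(2)] by blast

lemma homFt_eq_double_cosets:
  "homFt G H K = double_coset (centralizer_of G H) K ` transporter G H K"
  unfolding homFt_def double_coset_def set_mult_def r_coset_def by auto

lemma card_homFt:
  assumes "H \<subseteq> carrier G" and "subgroup K G"
  shows "card (homFt G H K) * (card (centralizer_of G H) * card K)
    = (\<Sum>g\<in>transporter G H K. card (K \<inter> centralizer_of G (conj_set G H g)))"
proof -
  have "card (K \<inter> centralizer_of G (conj_set G H g)) = card (K \<inter> conj_set G (centralizer_of G H) g)"
    if "g \<in> transporter G H K" for g
    using subsetD[OF transporter_subset that] centralizer_conj_set[OF assms(1)] by simp
  then show ?thesis
    unfolding homFt_eq_double_cosets
    using card_double_coset_image[OF subgroup_centralizer[OF assms(1)] assms(2) transporter_subset]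
      transporter_mult_left[OF assms(1)] transporter_mult_right[OF assms(2) _ _ assms(1)] by simp
qed

lemma sum_card_centralizers_transporter:
  assumes "subgroup K G"
  shows "(\<Sum>g\<in>transporter G H K. card (K \<inter> centralizer_of G (conj_set G H g)))
    = (\<Sum>k\<in>K. card (transporter G H (K \<inter> centralizer_of G {k})))"
proof -
  have K: "K \<subseteq> carrier G" and finK: "finite K"
    using assms subgroup.subset finite_subset_carrier by blast+
  have "(\<Sum>g\<in>transporter G H K. card (K \<inter> centralizer_of G (conj_set G H g)))
      = (\<Sum>g\<in>transporter G H K. \<Sum>k\<in>K. if k \<in> centralizer_of G (conj_set G H g) then 1 else 0)"
    by (simp add: sum.inter_filter[OF finK, symmetric] Int_def)
  also have "\<dots> = (\<Sum>k\<in>K. \<Sum>g\<in>transporter G H K. if k \<in> centralizer_of G (conj_set G H g) then 1 else 0)"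
    by (rule sum.swap)
  also have "\<dots> = (\<Sum>k\<in>K. card (transporter G H (K \<inter> centralizer_of G {k})))"
  proof (rule sum.cong[OF refl])
    fix k assume "k \<in> K"
    then have "{g\<in>transporter G H K. k \<in> centralizer_of G (conj_set G H g)}
        = transporter G H (K \<inter> centralizer_of G {k})"
      using K unfolding transporter_def centralizer_of_def by auto
    then show "(\<Sum>g\<in>transporter G H K. if k \<in> centralizer_of G (conj_set G H g) then 1 else 0)
        = card (transporter G H (K \<inter> centralizer_of G {k}))"
      by (simp add: sum.inter_filter[OF finite_subset_carrier[OF transporter_subset], symmetric])
  qed
  finally show ?thesis .
qed

definition generators :: "'a set \<Rightarrow> 'a set" where
  "generators H = {h \<in> H. generate G {h} = H}"

lemma generate_conj:
  assumes h: "h \<in> carrier G" and x: "x \<in> carrier G"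
  shows "generate G {inv x \<otimes> h \<otimes> x} = conj_set G (generate G {h}) x"
proof -
  have hom: "group_hom G G (\<lambda>h. inv x \<otimes> h \<otimes> x)" by (rule conjugation_hom[OF x])
  have "generate G {inv x \<otimes> h \<otimes> x} = {(inv x \<otimes> h \<otimes> x) [^] k | k. k \<in> (UNIV :: nat set)}"
    using h x by (simp add: generate_pow_on_finite_carrier[OF finite_carrier])
  also have "\<dots> = {inv x \<otimes> h [^] k \<otimes> x | k. k \<in> (UNIV :: nat set)}"
    using group_hom.hom_nat_pow[OF hom h] by simp
  also have "\<dots> = (\<lambda>h. inv x \<otimes> h \<otimes> x) ` {h [^] k | k. k \<in> (UNIV :: nat set)}"
    by blast
  finally show ?thesis
    unfolding conj_set_eq_image generate_pow_on_finite_carrier[OF finite_carrier h] .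
qed

lemma cyclic_subgroup_conj_set:
  assumes "cyclic_subgroup G C" and x: "x \<in> carrier G"
  shows "cyclic_subgroup G (conj_set G C x)"
proof -
  obtain a where a: "a \<in> carrier G" "C = generate G {a}"
    using assms(1) unfolding cyclic_subgroup_def by blast
  then have "conj_set G C x = generate G {inv x \<otimes> a \<otimes> x}" using generate_conj x by simp
  moreover have "subgroup (conj_set G C x) G"
    using assms subgroup_conj_set unfolding cyclic_subgroup_def by blast
  ultimately show ?thesis
    using a x unfolding cyclic_subgroup_def by blast
qed

lemma card_generators_conj_set:
  assumes H: "H \<subseteq> carrier G" and x: "x \<in> carrier G"
  shows "card (generators (conj_set G H x)) = card (generators H)"
proof -
  have "generators (conj_set G H x) = (\<lambda>h. inv x \<otimes> h \<otimes> x) ` generators H"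
  proof
    show "generators (conj_set G H x) \<subseteq> (\<lambda>h. inv x \<otimes> h \<otimes> x) ` generators H"
    proof
      fix y assume "y \<in> generators (conj_set G H x)"
      then obtain h where h: "h \<in> H" "y = inv x \<otimes> h \<otimes> x" "generate G {y} = conj_set G H x"
        unfolding generators_def conj_set_eq_image by auto
      have "h \<in> carrier G" using h H by auto
      then have "generate G {h} = H"
        using h generate_conj[OF _ x] conj_set_inject[OF generate_incl H x] by auto
      then show "y \<in> (\<lambda>h. inv x \<otimes> h \<otimes> x) ` generators H"
        using h unfolding generators_def by auto
    qed
    show "(\<lambda>h. inv x \<otimes> h \<otimes> x) ` generators H \<subseteq> generators (conj_set G H x)"
      using generate_conj[OF _ x] H unfolding generators_def conj_set_eq_image by auto
  qed
  moreover have "inj_on (\<lambda>h. inv x \<otimes> h \<otimes> x) (generators H)"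
    by (rule inj_on_subset[OF inj_on_conjugation[OF x]]) (use H in \<open>auto simp: generators_def\<close>)
  ultimately show ?thesis by (simp add: card_image)
qed

lemma generate_pow_eq_iff_coprime:
  assumes a: "a \<in> carrier G"
  shows "generate G {a [^] i} = generate G {a} \<longleftrightarrow> coprime i (ord a)"
proof -
  have ai: "a [^] i \<in> carrier G" using a by simp
  have "a [^] i \<in> generate G {a}"
    using generate_pow_on_finite_carrier[OF finite_carrier a] by blast
  then have sub: "generate G {a [^] i} \<subseteq> generate G {a}"
    by (intro generate_subgroup_incl generate_is_subgroup) (use a in auto)
  have "finite (generate G {a})" using a by (intro finite_subset_carrier generate_incl) simp
  then have "generate G {a [^] i} = generate G {a} \<longleftrightarrow> card (generate G {a [^] i}) = card (generate G {a})"
    using card_subset_eq[OF _ sub] by auto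
  also have "\<dots> \<longleftrightarrow> ord (a [^] i) = ord a"
    using generate_pow_card[OF ai] generate_pow_card[OF a] by simp
  also have "\<dots> \<longleftrightarrow> coprime i (ord a)"
    using pow_ord_eq_ord_iff[OF finite_carrier a] by simp
  finally show ?thesis .
qed

lemma card_generators_cyclic:
  assumes a: "a \<in> carrier G"
  shows "card (generators (generate G {a})) = totient (ord a)"
proof -
  define n where "n = ord a"
  have n: "n \<ge> 1" using ord_ge_1[OF finite_carrier a] n_def by simp
  have C_eq: "generate G {a} = (\<lambda>i. a [^] i) ` {0 .. n - 1}"
    unfolding n_def using generate_pow_on_finite_carrier[OF finite_carrier a] ord_elems[OF finite_carrier a]
    by auto
  have "generators (generate G {a}) = (\<lambda>i. a [^] i) ` {i \<in> {0 .. n - 1}. coprime i n}"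
    unfolding generators_def using generate_pow_eq_iff_coprime[OF a] C_eq n_def by auto
  moreover have "inj_on (\<lambda>i. a [^] i) {i \<in> {0 .. n - 1}. coprime i n}"
    by (rule inj_on_subset[OF ord_inj[OF a]]) (auto simp: n_def)
  ultimately have "card (generators (generate G {a})) = card {i \<in> {0 .. n - 1}. coprime i n}"
    by (simp add: card_image)
  also have "\<dots> = totient n"
  proof (cases "n = 1")
    case False
    then have "{i \<in> {0 .. n - 1}. coprime i n} = totatives n"
      using n unfolding totatives_def by (auto simp: le_less)
    then show ?thesis by (simp add: totient_def)
  qed simp
  finally show ?thesis unfolding n_def .
qed

end

section \<open>Nonidentity \<open>p\<close>-subgroups\<close>

locale finite_group_prime = finite_group +
  fixes p :: nat
  assumes prime_p: "Factorial_Ring.prime p"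
begin

abbreviation Ob :: "'a set set" where "Ob \<equiv> nonid_p_subgroups G p"

lemma mem_Ob_iff: "H \<in> Ob \<longleftrightarrow> subgroup H G \<and> H \<noteq> {\<one>} \<and> is_p_power p (card H)"
  unfolding nonid_p_subgroups_def by simp

lemma Ob_subgroup: "H \<in> Ob \<Longrightarrow> subgroup H G"
  by (simp add: mem_Ob_iff)

lemma Ob_subset: "H \<in> Ob \<Longrightarrow> H \<subseteq> carrier G"
  by (simp add: mem_Ob_iff subgroup.subset)

lemma finite_Ob: "finite Ob"
proof -
  have "Ob \<subseteq> Pow (carrier G)" using Ob_subset by blast
  then show ?thesis using finite_carrier finite_subset by blast
qed

lemma Ob_conj_set: assumes H: "H \<in> Ob" and g: "g \<in> carrier G" shows "conj_set G H g \<in> Ob"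
proof -
  have "conj_set G H g \<noteq> conj_set G {\<one>} g"
    using H g conj_set_inject[OF Ob_subset[OF H] _ g] mem_Ob_iff by auto
  then show ?thesis
    using H g subgroup_conj_set card_conj_set Ob_subset conj_set_trivial
    unfolding mem_Ob_iff by auto
qed

lemma Ob_subgroup_mem:
  assumes K: "K \<in> Ob" and L: "subgroup L G" "L \<subseteq> K" "L \<noteq> {\<one>}"
  shows "L \<in> Ob"
proof -
  obtain k where "card K = p ^ k" using K unfolding mem_Ob_iff is_p_power_def by blast
  moreover have "card L dvd card K" using card_subgroup_dvd L Ob_subgroup[OF K] by blast
  ultimately obtain i where "card L = p ^ i" using divides_primepow_nat[OF prime_p] by auto
  then show ?thesis using L unfolding mem_Ob_iff is_p_power_def by blast
qed

lemma mobius1_trivial: "mobius1 G {\<one>} = 1"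
  unfolding mobius1_def using finite_carrier triv_subgroup by (subst mobius.simps) simp

lemma mobius1_rec:
  assumes "subgroup K G" and "K \<noteq> {\<one>}"
  shows "mobius1 G K = - (\<Sum>L\<in>{L. subgroup L G \<and> {\<one>} \<subseteq> L \<and> L \<subset> K}. mobius1 G L)"
proof -
  have "{\<one>} \<subseteq> K" using assms(1) subgroup.one_closed by blast
  then show ?thesis
    unfolding mobius1_def using finite_carrier triv_subgroup assms by (subst mobius.simps) simp
qed

lemma sum_mobius1_subgroups:
  assumes K: "subgroup K G" "K \<noteq> {\<one>}"
  shows "(\<Sum>L\<in>{L. subgroup L G \<and> L \<subseteq> K}. mobius1 G L) = 0"
proof -
  have fin: "finite {L. subgroup L G \<and> {\<one>} \<subseteq> L \<and> L \<subset> K}"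
    by (rule finite_subset[of _ "Pow (carrier G)"]) (use subgroup.subset finite_carrier in auto)
  have "{L. subgroup L G \<and> L \<subseteq> K} = insert K {L. subgroup L G \<and> {\<one>} \<subseteq> L \<and> L \<subset> K}"
    using K subgroup.one_closed by auto
  then show ?thesis using fin mobius1_rec[OF K] by simp
qed

lemma sum_mobius1_Ob: assumes K: "K \<in> Ob" shows "(\<Sum>L\<in>{L\<in>Ob. L \<subseteq> K}. mobius1 G L) = -1"
proof -
  have "{L. subgroup L G \<and> L \<subseteq> K} = insert {\<one>} {L\<in>Ob. L \<subseteq> K}"
    using K Ob_subgroup_mem[OF K] subgroup.one_closed triv_subgroup unfolding mem_Ob_iff by auto
  moreover have "{\<one>} \<notin> {L\<in>Ob. L \<subseteq> K}" by (simp add: mem_Ob_iff)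
  moreover have "finite {L\<in>Ob. L \<subseteq> K}" using finite_Ob by simp
  ultimately have "mobius1 G {\<one>} + (\<Sum>L\<in>{L\<in>Ob. L \<subseteq> K}. mobius1 G L) = 0"
    using sum_mobius1_subgroups[OF Ob_subgroup[OF K]] K by (simp add: mem_Ob_iff)
  then show ?thesis using mobius1_trivial by simp
qed

lemma mobius1_conj_set: "subgroup K G \<Longrightarrow> x \<in> carrier G \<Longrightarrow> mobius1 G (conj_set G K x) = mobius1 G K"
proof (induction "card K" arbitrary: K rule: less_induct)
  case less
  note K = less.prems(1) and x = less.prems(2)
  have Ks: "K \<subseteq> carrier G" using K subgroup.subset by blast
  show ?case
  proof (cases "K = {\<one>}")
    case True
    then show ?thesis using conj_set_trivial x by simp
  next
    case False
    then have Kx: "conj_set G K x \<noteq> {\<one>}"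
      using conj_set_inject[OF Ks _ x, of "{\<one>}"] conj_set_trivial[OF x] by auto
    let ?below = "\<lambda>K. {L. subgroup L G \<and> {\<one>} \<subseteq> L \<and> L \<subset> K}"
    have "(\<Sum>L\<in>?below K. mobius1 G L) = (\<Sum>L\<in>?below (conj_set G K x). mobius1 G L)"
    proof (rule sum.reindex_bij_witness[where j = "\<lambda>L. conj_set G L x" and i = "\<lambda>L. conj_set G L (inv x)"])
      fix L assume "L \<in> ?below K"
      then have L: "subgroup L G" "L \<subset> K" and Ls: "L \<subseteq> carrier G" using subgroup.subset by auto
      show "conj_set G (conj_set G L x) (inv x) = L" using conj_set_inv_cancel[OF Ls x] .
      show "conj_set G L x \<in> ?below (conj_set G K x)"
        using subgroup_conj_set[OF L(1) x] subgroup.one_closed conj_set_psubset_iff[OF Ls Ks x] L(2) by auto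
      have "card L < card K" using L(2) finite_subset_carrier[OF Ks] psubset_card_mono by blast
      then show "mobius1 G (conj_set G L x) = mobius1 G L" using less.hyps L(1) x by blast
    next
      fix L assume "L \<in> ?below (conj_set G K x)"
      then have L: "subgroup L G" "L \<subset> conj_set G K x" and Ls: "L \<subseteq> carrier G"
        using subgroup.subset by auto
      show "conj_set G (conj_set G L (inv x)) x = L" using conj_set_inv_cancel'[OF Ls x] .
      have "conj_set G L (inv x) \<subset> K"
        using conj_set_psubset_iff[OF Ls conj_set_closed[OF Ks x], of "inv x"] L(2) x
          conj_set_inv_cancel[OF Ks x] by simp
      then show "conj_set G L (inv x) \<in> ?below K"
        using subgroup_conj_set[OF L(1)] x subgroup.one_closed by auto
    qed
    then show ?thesis using mobius1_rec K False subgroup_conj_set[OF K x] Kx by simp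
  qed
qed

lemma sum_mult_card_transporter:
  fixes f :: "'a set \<Rightarrow> rat"
  assumes K: "K \<in> Ob" and f: "\<And>H x. H \<in> Ob \<Longrightarrow> x \<in> carrier G \<Longrightarrow> f (conj_set G H x) = f H"
  shows "(\<Sum>H\<in>Ob. f H * of_nat (card (transporter G H K)))
    = of_nat (card (carrier G)) * (\<Sum>L\<in>{L\<in>Ob. L \<subseteq> K}. f L)"
proof -
  have "(\<Sum>H\<in>Ob. f H * of_nat (card (transporter G H K)))
      = (\<Sum>H\<in>Ob. \<Sum>g\<in>carrier G. if conj_set G H g \<subseteq> K then f H else 0)"
    unfolding transporter_def
    by (intro sum.cong refl) (simp add: sum.inter_filter[OF finite_carrier, symmetric])
  also have "\<dots> = (\<Sum>g\<in>carrier G. \<Sum>H\<in>Ob. if conj_set G H g \<subseteq> K then f H else 0)"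
    by (rule sum.swap)
  also have "\<dots> = (\<Sum>g\<in>carrier G. \<Sum>L\<in>{L\<in>Ob. L \<subseteq> K}. f L)"
  proof (rule sum.cong[OF refl])
    fix g assume g: "g \<in> carrier G"
    have "(\<Sum>H\<in>Ob. if conj_set G H g \<subseteq> K then f H else 0) = (\<Sum>H\<in>{H\<in>Ob. conj_set G H g \<subseteq> K}. f H)"
      using finite_Ob by (simp add: sum.inter_filter)
    also have "\<dots> = (\<Sum>L\<in>{L\<in>Ob. L \<subseteq> K}. f L)"
      by (rule sum.reindex_bij_witness[where j = "\<lambda>H. conj_set G H g" and i = "\<lambda>L. conj_set G L (inv g)"])
        (use g f Ob_conj_set Ob_subset conj_set_inv_cancel conj_set_inv_cancel' in auto)
    finally show "(\<Sum>H\<in>Ob. if conj_set G H g \<subseteq> K then f H else 0) = (\<Sum>L\<in>{L\<in>Ob. L \<subseteq> K}. f L)" .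
  qed
  finally show ?thesis by simp
qed

lemma sum_mobius1_mult_card_transporter:
  assumes K: "K \<in> Ob"
  shows "(\<Sum>H\<in>Ob. - of_int (mobius1 G H) * of_nat (card (transporter G H K))) = (of_nat (card (carrier G)) :: rat)"
proof -
  have "(\<Sum>L\<in>{L\<in>Ob. L \<subseteq> K}. - (of_int (mobius1 G L) :: rat)) = 1"
    using sum_mobius1_Ob[OF K] by (simp add: sum_negf flip: of_int_sum)
  then show ?thesis
    using sum_mult_card_transporter[OF K, of "\<lambda>H. - of_int (mobius1 G H)"]
    by (simp add: mobius1_conj_set Ob_subgroup)
qed

lemma conj_class_conj_set:
  assumes H: "H \<subseteq> carrier G" and x: "x \<in> carrier G"
  shows "conj_class G (conj_set G H x) = conj_class G H"
proof -
  have "conj_class G (conj_set G H x) = (\<lambda>g. conj_set G H (x \<otimes> g)) ` carrier G"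
    unfolding conj_class_def setcompr_eq_image Collect_mem_eq
    using H x by (intro image_cong refl) (simp add: conj_set_conj_set)
  also have "\<dots> = (\<lambda>g. conj_set G H g) ` ((\<lambda>g. x \<otimes> g) ` carrier G)"
    by (simp add: image_image)
  also have "(\<lambda>g. x \<otimes> g) ` carrier G = carrier G"
    using x by (rule surj_const_mult)
  finally show ?thesis unfolding conj_class_def by auto
qed

lemma sum_classes_eq:
  fixes f :: "'a set \<Rightarrow> rat"
  assumes S: "S \<subseteq> Ob" and closed: "\<And>H x. H \<in> S \<Longrightarrow> x \<in> carrier G \<Longrightarrow> conj_set G H x \<in> S"
    and f: "\<And>H x. H \<in> S \<Longrightarrow> x \<in> carrier G \<Longrightarrow> f (conj_set G H x) = f H"
  shows "(\<Sum>H\<in>S. f H * of_nat (card (transporter G H H)) / of_nat (card (carrier G))) = sum_classes G S f"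
proof -
  let ?w = "\<lambda>H. f H * of_nat (card (transporter G H H)) / of_nat (card (carrier G))"
  have "(\<Sum>H\<in>S. ?w H) = (\<Sum>Cl\<in>conj_class G ` S. \<Sum>H\<in>{H\<in>S. conj_class G H = Cl}. ?w H)"
    by (rule sum.image_gen) (use S finite_Ob finite_subset in blast)
  also have "\<dots> = (\<Sum>Cl\<in>conj_class G ` S. f (SOME H. H \<in> Cl \<and> H \<in> S))"
  proof (rule sum.cong[OF refl])
    fix Cl assume "Cl \<in> conj_class G ` S"
    then obtain H0 where H0: "H0 \<in> S" "Cl = conj_class G H0" by auto
    have H0s: "H0 \<subseteq> carrier G" using Ob_subset H0 S by blast
    have Cl_eq: "Cl = (\<lambda>x. conj_set G H0 x) ` carrier G"
      using H0(2) unfolding conj_class_def by auto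
    have fiber: "{H\<in>S. conj_class G H = Cl} = Cl"
    proof
      show "{H\<in>S. conj_class G H = Cl} \<subseteq> Cl"
        using conj_set_one Ob_subset S unfolding conj_class_def by blast
      show "Cl \<subseteq> {H\<in>S. conj_class G H = Cl}"
        using Cl_eq closed[OF H0(1)] conj_class_conj_set[OF H0s] H0(2) by auto
    qed
    have w: "?w H = ?w H0" if "H \<in> Cl" for H
      using that f[OF H0(1)] card_transporter_conj_set[OF H0s H0s] Cl_eq by auto
    have "(\<Sum>H\<in>Cl. ?w H) = (\<Sum>H\<in>Cl. ?w H0)" by (rule sum.cong[OF refl]) (rule w)
    also have "\<dots> = of_nat (card Cl) * ?w H0" by simp
    also have "\<dots> = f H0"
      using card_conj_class_mult_normalizer[OF H0s] H0(2) card_carrier_pos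
      by (simp add: field_simps flip: of_nat_mult)
    also have "f H0 = f (SOME H. H \<in> Cl \<and> H \<in> S)"
    proof -
      have "H0 \<in> Cl \<and> H0 \<in> S" using H0 fiber by auto
      then have "(SOME H. H \<in> Cl \<and> H \<in> S) \<in> Cl" by (metis (mono_tags, lifting) someI)
      then show ?thesis using Cl_eq f[OF H0(1)] by auto
    qed
    finally show "(\<Sum>H\<in>{H\<in>S. conj_class G H = Cl}. ?w H) = f (SOME H. H \<in> Cl \<and> H \<in> S)"
      using fiber by simp
  qed
  finally show ?thesis unfolding sum_classes_def conj_classes_def .
qed

lemma sum_card_generators:
  assumes K: "K \<in> Ob"
  shows "(\<Sum>L\<in>{L\<in>Ob. L \<subseteq> K}. card (generators L)) = card K - 1"
proof -
  have KG: "subgroup K G" and Ks: "K \<subseteq> carrier G" using K Ob_subgroup Ob_subset by auto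
  have "(\<Sum>L\<in>{L\<in>Ob. L \<subseteq> K}. card (generators L)) = card (\<Union>L\<in>{L\<in>Ob. L \<subseteq> K}. generators L)"
    using finite_Ob finite_subset_carrier[OF Ob_subset]
    by (intro card_UN_disjoint[symmetric]) (auto simp: generators_def)
  also have "(\<Union>L\<in>{L\<in>Ob. L \<subseteq> K}. generators L) = K - {\<one>}"
  proof
    show "(\<Union>L\<in>{L\<in>Ob. L \<subseteq> K}. generators L) \<subseteq> K - {\<one>}"
      using generate_one unfolding generators_def mem_Ob_iff by auto
    show "K - {\<one>} \<subseteq> (\<Union>L\<in>{L\<in>Ob. L \<subseteq> K}. generators L)"
    proof
      fix h assume h: "h \<in> K - {\<one>}"
      have sub: "generate G {h} \<subseteq> K" using generate_subgroup_incl[OF _ KG] h by simp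
      moreover have "h \<in> generate G {h}" by (simp add: generate.incl)
      moreover from this have "generate G {h} \<in> Ob"
        using h Ks generate_is_subgroup[of "{h}"] Ob_subgroup_mem[OF K _ sub] by auto
      ultimately show "h \<in> (\<Union>L\<in>{L\<in>Ob. L \<subseteq> K}. generators L)"
        unfolding generators_def by auto
    qed
  qed
  also have "card (K - {\<one>}) = card K - 1"
    using subgroup.one_closed[OF KG] finite_subset_carrier[OF Ks] by simp
  finally show ?thesis .
qed

lemma card_generators_cyclic_Ob:
  assumes C: "C \<in> Ob" and cyc: "cyclic_subgroup G C"
  shows "p * card (generators C) = (p - 1) * card C"
proof -
  obtain a where a: "a \<in> carrier G" "C = generate G {a}"
    using cyc unfolding cyclic_subgroup_def by blast
  obtain k where k: "card C = p ^ k" using C unfolding mem_Ob_iff is_p_power_def by blast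
  have "k > 0"
  proof (rule ccontr)
    assume "\<not> k > 0"
    then obtain c where "C = {c}" using k card_1_singletonE by auto
    then show False using C subgroup.one_closed unfolding mem_Ob_iff by force
  qed
  have "card (generators C) = totient (p ^ k)"
    using card_generators_cyclic[OF a(1)] generate_pow_card[OF a(1)] a(2) k by simp
  also have "\<dots> = p ^ (k - 1) * (p - 1)" using totient_prime_power[OF prime_p \<open>k > 0\<close>] .
  finally show ?thesis using k \<open>k > 0\<close> by (simp add: power_eq_if)
qed

lemma generators_empty_if_not_cyclic:
  assumes "C \<in> Ob" and "\<not> cyclic_subgroup G C"
  shows "generators C = {}"
  using assms Ob_subset unfolding generators_def cyclic_subgroup_def mem_Ob_iff by blast

section \<open>The Euler characteristics\<close>

definition conjugate :: "'a set \<Rightarrow> 'a set \<Rightarrow> bool" where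
  "conjugate H K \<longleftrightarrow> (\<exists>x\<in>carrier G. K = conj_set G H x)"

lemma sum_conjugates_conj_set:
  assumes K: "K \<in> Ob" and x: "x \<in> carrier G"
  shows "(\<Sum>L\<in>{L\<in>Ob. conjugate K L}. f (conj_set G L x)) = (\<Sum>L\<in>{L\<in>Ob. conjugate K L}. f L)"
proof (rule sum.reindex_bij_witness[where i = "\<lambda>L. conj_set G L (inv x)" and j = "\<lambda>L. conj_set G L x"])
  have closed: "conj_set G L y \<in> {L\<in>Ob. conjugate K L}"
    if L: "L \<in> {L\<in>Ob. conjugate K L}" and y: "y \<in> carrier G" for L y
  proof -
    obtain z where z: "z \<in> carrier G" "L = conj_set G K z" using L unfolding conjugate_def by blast
    then have "conj_set G L y = conj_set G K (z \<otimes> y)"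
      using y Ob_subset[OF K] by (simp add: conj_set_conj_set)
    then have "conjugate K (conj_set G L y)" unfolding conjugate_def using y z(1) by blast
    then show ?thesis using L y Ob_conj_set by simp
  qed
  fix L assume L: "L \<in> {L\<in>Ob. conjugate K L}"
  then show "conj_set G (conj_set G L (inv x)) x = L" "conj_set G (conj_set G L x) (inv x) = L"
    using conj_set_inv_cancel'[OF Ob_subset x] conj_set_inv_cancel[OF Ob_subset x] by auto
  show "conj_set G L (inv x) \<in> {L\<in>Ob. conjugate K L}" "conj_set G L x \<in> {L\<in>Ob. conjugate K L}"
    using closed[OF L] x by auto
qed simp

lemma weighting_exists_if_conj_invariant:
  fixes \<zeta> :: "'a set \<Rightarrow> 'a set \<Rightarrow> nat"
  assumes inv: "\<And>H K x. H \<in> Ob \<Longrightarrow> K \<in> Ob \<Longrightarrow> x \<in> carrier G \<Longrightarrow>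
      \<zeta> (conj_set G H x) (conj_set G K x) = \<zeta> H K"
    and nonzero: "\<And>H K. H \<in> Ob \<Longrightarrow> K \<in> Ob \<Longrightarrow> \<zeta> H K \<noteq> 0 \<Longrightarrow> transporter G H K \<noteq> {}"
    and diag: "\<And>H. H \<in> Ob \<Longrightarrow> 0 < \<zeta> H H"
  shows "\<exists>k. is_weighting Ob \<zeta> k"
proof -
  interpret stratified_zeta Ob \<zeta> conjugate card
  proof
    show "finite Ob" by (rule finite_Ob)
    show "conjugate H H" if "H \<in> Ob" for H
      using that Ob_subset conj_set_one unfolding conjugate_def by (metis one_closed)
    show "conjugate K H" if "H \<in> Ob" "K \<in> Ob" "conjugate H K" for H K
      using that Ob_subset conj_set_inv_cancel inv_closed unfolding conjugate_def by metis
    show "conjugate H L" if "H \<in> Ob" "K \<in> Ob" "L \<in> Ob" "conjugate H K" "conjugate K L" for H K L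
      using that Ob_subset conj_set_conj_set m_closed unfolding conjugate_def by metis
    show "card H = card K" if "H \<in> Ob" "K \<in> Ob" "conjugate H K" for H K
      using that card_conj_set Ob_subset unfolding conjugate_def by auto
    show "card H < card K \<or> conjugate H K" if H: "H \<in> Ob" and K: "K \<in> Ob" and "\<zeta> H K \<noteq> 0" for H K
    proof -
      obtain g where g: "g \<in> carrier G" "conj_set G H g \<subseteq> K"
        using nonzero[OF H K \<open>\<zeta> H K \<noteq> 0\<close>] unfolding transporter_def by blast
      have "card H \<le> card K"
        using g card_conj_set[OF Ob_subset[OF H] g(1)] card_mono finite_subset_carrier[OF Ob_subset[OF K]]
        by metis
      moreover have "card H = card K \<Longrightarrow> conjugate H K"
        using conj_set_eq_if_subset[OF Ob_subset[OF H] g] finite_subset_carrier Ob_subset K g(1)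
        unfolding conjugate_def by fastforce
      ultimately show ?thesis by linarith
    qed
    show "0 < \<zeta> H H" if "H \<in> Ob" for H using diag that .
    show "(\<Sum>L\<in>{L\<in>Ob. conjugate K L}. \<zeta> H L) = (\<Sum>L\<in>{L\<in>Ob. conjugate K L}. \<zeta> H' L)"
      if H: "H \<in> Ob" and K: "K \<in> Ob" and conj: "conjugate H H'" for H H' K
    proof -
      obtain x where x: "x \<in> carrier G" "H' = conj_set G H x" using conj unfolding conjugate_def by blast
      then show ?thesis
        using sum_conjugates_conj_set[OF K x(1), of "\<zeta> H'"] inv[OF H _ x(1)] by simp
    qed
  qed
  show ?thesis by (rule weighting_exists)
qed

lemma weighting_exists_transporter_quotient:
  fixes \<zeta> :: "'a set \<Rightarrow> 'a set \<Rightarrow> nat" and c d :: "'a set \<Rightarrow> nat"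
  assumes quot: "\<And>H K. H \<in> Ob \<Longrightarrow> K \<in> Ob \<Longrightarrow> \<zeta> H K * (c H * d K) = card (transporter G H K)"
    and pos: "\<And>H. H \<in> Ob \<Longrightarrow> 0 < c H * d H"
    and inv: "\<And>H x. H \<in> Ob \<Longrightarrow> x \<in> carrier G \<Longrightarrow> c (conj_set G H x) = c H \<and> d (conj_set G H x) = d H"
  shows "\<exists>k. is_weighting Ob \<zeta> k"
proof (rule weighting_exists_if_conj_invariant)
  fix H K x assume H: "H \<in> Ob" and K: "K \<in> Ob" and x: "x \<in> carrier G"
  have "\<zeta> (conj_set G H x) (conj_set G K x) * (c H * d K) = \<zeta> H K * (c H * d K)"
    using quot[OF Ob_conj_set[OF H x] Ob_conj_set[OF K x]] quot[OF H K] inv[OF H x] inv[OF K x]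
      card_transporter_conj_set[OF Ob_subset[OF H] Ob_subset[OF K] x] by simp
  moreover have "0 < c H * d K"
    using pos[OF H] pos[OF K] by simp
  ultimately show "\<zeta> (conj_set G H x) (conj_set G K x) = \<zeta> H K" by simp
next
  fix H K assume "H \<in> Ob" "K \<in> Ob" "\<zeta> H K \<noteq> 0"
  then show "transporter G H K \<noteq> {}" using quot[of H K] pos by fastforce
next
  fix H assume H: "H \<in> Ob"
  then show "0 < \<zeta> H H"
    using quot[OF H H] card_transporter_self_pos[OF Ob_subset[OF H]] by (metis gr0I mult_0)
qed

lemma coweighting_transporter_quotient:
  fixes \<zeta> :: "'a set \<Rightarrow> 'a set \<Rightarrow> nat" and c :: "'a set \<Rightarrow> nat"
  assumes quot: "\<And>H K. H \<in> Ob \<Longrightarrow> K \<in> Ob \<Longrightarrow> \<zeta> H K * c H = card (transporter G H K)"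
  shows "is_coweighting Ob \<zeta> (\<lambda>H. - of_int (mobius1 G H) * of_nat (c H) / of_nat (card (carrier G)))"
  unfolding is_coweighting_def
proof
  fix K assume K: "K \<in> Ob"
  have "(\<Sum>H\<in>Ob. - of_int (mobius1 G H) * of_nat (c H) / of_nat (card (carrier G)) * of_nat (\<zeta> H K))
      = (\<Sum>H\<in>Ob. - of_int (mobius1 G H) * of_nat (card (transporter G H K)) / of_nat (card (carrier G)) :: rat)"
    by (intro sum.cong refl) (simp add: quot[OF _ K, symmetric])
  also have "\<dots> = (\<Sum>H\<in>Ob. - of_int (mobius1 G H) * of_nat (card (transporter G H K))) / of_nat (card (carrier G))"
    by (simp add: sum_divide_distrib)
  also have "\<dots> = 1"
    using sum_mobius1_mult_card_transporter[OF K] card_carrier_pos by simp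
  finally show "(\<Sum>H\<in>Ob. - of_int (mobius1 G H) * of_nat (c H) / of_nat (card (carrier G)) * of_nat (\<zeta> H K)) = (1 :: rat)" .
qed

lemma euler_char_transporter_quotient:
  fixes \<zeta> :: "'a set \<Rightarrow> 'a set \<Rightarrow> nat" and c :: "'a set \<Rightarrow> nat"
  assumes quot: "\<And>H K. H \<in> Ob \<Longrightarrow> K \<in> Ob \<Longrightarrow> \<zeta> H K * c H = card (transporter G H K)"
    and pos: "\<And>H. H \<in> Ob \<Longrightarrow> 0 < c H"
    and inv: "\<And>H x. H \<in> Ob \<Longrightarrow> x \<in> carrier G \<Longrightarrow> c (conj_set G H x) = c H"
  shows "has_euler_char Ob \<zeta>"
    and "euler_char Ob \<zeta> = (\<Sum>H\<in>Ob. - of_int (mobius1 G H) * of_nat (c H) / of_nat (card (carrier G)))"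
    and "euler_char Ob \<zeta> = sum_classes G Ob (\<lambda>H. - of_int (mobius1 G H) / of_nat (\<zeta> H H))"
proof -
  obtain k where k: "is_weighting Ob \<zeta> k"
    using weighting_exists_transporter_quotient[where d = "\<lambda>_. 1"] quot pos inv by fastforce
  note euler = euler_char_eq_coweighting_sum[OF finite_Ob k coweighting_transporter_quotient[OF quot]]
  show "has_euler_char Ob \<zeta>" by (rule euler(1))
  show "euler_char Ob \<zeta> = (\<Sum>H\<in>Ob. - of_int (mobius1 G H) * of_nat (c H) / of_nat (card (carrier G)))"
    by (rule euler(2))
  have "(- of_int (mobius1 G H) / of_nat (\<zeta> H H)) * of_nat (card (transporter G H H)) / of_nat (card (carrier G))
      = (- of_int (mobius1 G H) * of_nat (c H) / of_nat (card (carrier G)) :: rat)" if H: "H \<in> Ob" for H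
  proof -
    have "0 < \<zeta> H H"
      using quot[OF H H] card_transporter_self_pos[OF Ob_subset[OF H]] by (metis gr0I mult_0)
    then show ?thesis using card_carrier_pos by (simp add: quot[OF H H, symmetric] field_simps)
  qed
  moreover have "(- of_int (mobius1 G (conj_set G H x)) / of_nat (\<zeta> (conj_set G H x) (conj_set G H x)) :: rat)
      = - of_int (mobius1 G H) / of_nat (\<zeta> H H)" if "H \<in> Ob" "x \<in> carrier G" for H x
    using that quot[OF that(1) that(1)] quot[OF Ob_conj_set[OF that] Ob_conj_set[OF that]] inv pos
      card_transporter_conj_set[OF Ob_subset Ob_subset] mobius1_conj_set[OF Ob_subgroup]
    by (metis mult_right_cancel not_gr0)
  ultimately show "euler_char Ob \<zeta> = sum_classes G Ob (\<lambda>H. - of_int (mobius1 G H) / of_nat (\<zeta> H H))"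
    using euler(2) sum_classes_eq[OF subset_refl Ob_conj_set] by (metis (no_types, lifting) sum.cong)
qed

lemma euler_char_homT:
  shows "has_euler_char Ob (\<lambda>H K. card (homT G H K))"
    and "euler_char Ob (\<lambda>H K. card (homT G H K))
      = (\<Sum>H\<in>Ob. - of_int (mobius1 G H) / of_nat (card (carrier G)))"
    and "euler_char Ob (\<lambda>H K. card (homT G H K))
      = sum_classes G Ob (\<lambda>H. - of_int (mobius1 G H) / of_nat (card (homT G H H)))"
  using euler_char_transporter_quotient[where \<zeta> = "\<lambda>H K. card (homT G H K)" and c = "\<lambda>_. 1"]
  by (simp_all add: homT_def)

lemma card_centralizer_conj_set:
  "H \<in> Ob \<Longrightarrow> x \<in> carrier G \<Longrightarrow> card (centralizer_of G (conj_set G H x)) = card (centralizer_of G H)"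
  using centralizer_conj_set card_conj_set centralizer_subset Ob_subset by simp

lemma euler_char_homF:
  shows "has_euler_char Ob (\<lambda>H K. card (homF G H K))"
    and "euler_char Ob (\<lambda>H K. card (homF G H K))
      = (\<Sum>H\<in>Ob. - of_int (mobius1 G H) * of_nat (card (centralizer_of G H)) / of_nat (card (carrier G)))"
    and "euler_char Ob (\<lambda>H K. card (homF G H K))
      = sum_classes G Ob (\<lambda>H. - of_int (mobius1 G H) / of_nat (card (homF G H H)))"
  using euler_char_transporter_quotient[where \<zeta> = "\<lambda>H K. card (homF G H K)"
      and c = "\<lambda>H. card (centralizer_of G H)"]
    card_homF[OF Ob_subset] card_subgroup_pos[OF subgroup_centralizer[OF Ob_subset]]
    card_centralizer_conj_set
  by auto

lemma card_Op_centralizer_conj_set: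
  assumes H: "H \<in> Ob" and x: "x \<in> carrier G"
  shows "card (Op G p (centralizer_of G (conj_set G H x))) = card (Op G p (centralizer_of G H))"
proof -
  have C: "subgroup (centralizer_of G H) G" "finite (centralizer_of G H)"
    using subgroup_centralizer Ob_subset[OF H] finite_subset_carrier centralizer_subset by auto
  then show ?thesis
    using centralizer_conj_set[OF Ob_subset[OF H] x] Op_conj_set[OF C x]
      card_conj_set[OF subgroup.subset[OF subgroup_Op[OF C]] x] by simp
qed

lemma euler_char_homL:
  shows "has_euler_char Ob (\<lambda>H K. card (homL G p H K))"
    and "euler_char Ob (\<lambda>H K. card (homL G p H K))
      = sum_classes G Ob (\<lambda>H. - of_int (mobius1 G H) / of_nat (card (homL G p H H)))"
proof -
  have "0 < card (Op G p (centralizer_of G H))" if "H \<in> Ob" for H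
  proof -
    have "subgroup (centralizer_of G H) G" "finite (centralizer_of G H)"
      using subgroup_centralizer Ob_subset[OF that] finite_subset_carrier centralizer_subset by auto
    then show ?thesis using card_subgroup_pos subgroup_Op by blast
  qed
  then show "has_euler_char Ob (\<lambda>H K. card (homL G p H K))"
    and "euler_char Ob (\<lambda>H K. card (homL G p H K))
      = sum_classes G Ob (\<lambda>H. - of_int (mobius1 G H) / of_nat (card (homL G p H H)))"
    using euler_char_transporter_quotient[where \<zeta> = "\<lambda>H K. card (homL G p H K)"
        and c = "\<lambda>H. card (Op G p (centralizer_of G H))"]
      card_homL[OF Ob_subset] card_Op_centralizer_conj_set by auto
qed

lemma euler_char_homS:
  shows "has_euler_char Ob (\<lambda>H K. card (homS H K))"
    and "euler_char Ob (\<lambda>H K. card (homS H K)) = (\<Sum>H\<in>Ob. - of_int (mobius1 G H))"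
proof -
  have card_homS: "card (homS H K) = (if H \<subseteq> K then 1 else 0)" for H K :: "'a set"
    unfolding homS_def by simp
  have "\<exists>k. is_weighting Ob (\<lambda>H K. card (homS H K)) k"
  proof (rule weighting_exists_if_conj_invariant)
    fix H K x assume "H \<in> Ob" "K \<in> Ob" "x \<in> carrier G"
    then show "card (homS (conj_set G H x) (conj_set G K x)) = card (homS H K)"
      using conj_set_mono conj_set_inv_cancel Ob_subset unfolding card_homS by metis
  next
    fix H K assume "H \<in> Ob" "card (homS H K) \<noteq> 0"
    then show "transporter G H K \<noteq> {}"
      using one_in_transporter[OF Ob_subset] unfolding card_homS transporter_def
      by (auto split: if_splits)
  qed (simp add: card_homS)
  then obtain k where k: "is_weighting Ob (\<lambda>H K. card (homS H K)) k" by blast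
  have "is_coweighting Ob (\<lambda>H K. card (homS H K)) (\<lambda>H. - of_int (mobius1 G H))"
    unfolding is_coweighting_def
  proof
    fix K assume K: "K \<in> Ob"
    have "(\<Sum>H\<in>Ob. - of_int (mobius1 G H) * of_nat (card (homS H K)))
        = (\<Sum>H\<in>{H\<in>Ob. H \<subseteq> K}. - (of_int (mobius1 G H) :: rat))"
      unfolding card_homS using finite_Ob by (simp add: sum.inter_filter if_distrib cong: if_cong)
    also have "\<dots> = 1" using sum_mobius1_Ob[OF K] by (simp add: sum_negf flip: of_int_sum)
    finally show "(\<Sum>H\<in>Ob. - of_int (mobius1 G H) * of_nat (card (homS H K))) = (1::rat)" .
  qed
  from euler_char_eq_coweighting_sum[OF finite_Ob k this]
  show "has_euler_char Ob (\<lambda>H K. card (homS H K))"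
    and "euler_char Ob (\<lambda>H K. card (homS H K)) = (\<Sum>H\<in>Ob. - of_int (mobius1 G H))" by simp_all
qed

lemma card_homFt_eq_sum:
  assumes "H \<in> Ob" and "K \<in> Ob"
  shows "card (homFt G H K) * (card (centralizer_of G H) * card K)
    = (\<Sum>k\<in>K. card (transporter G H (K \<inter> centralizer_of G {k})))"
  using card_homFt[OF Ob_subset Ob_subgroup] sum_card_centralizers_transporter[OF Ob_subgroup] assms
  by simp

lemma sum_card_transporter_centralizers_conj_set:
  assumes H: "H \<in> Ob" and K: "K \<in> Ob" and x: "x \<in> carrier G"
  shows "(\<Sum>k\<in>conj_set G K x. card (transporter G (conj_set G H x) (conj_set G K x \<inter> centralizer_of G {k})))
    = (\<Sum>k\<in>K. card (transporter G H (K \<inter> centralizer_of G {k})))"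
proof -
  have Ks: "K \<subseteq> carrier G" using Ob_subset[OF K] .
  have "(\<Sum>k\<in>conj_set G K x. card (transporter G (conj_set G H x) (conj_set G K x \<inter> centralizer_of G {k})))
      = (\<Sum>k\<in>K. card (transporter G (conj_set G H x)
          (conj_set G K x \<inter> centralizer_of G {inv x \<otimes> k \<otimes> x})))"
    unfolding conj_set_eq_image[of K]
    by (rule sum.reindex[OF inj_on_subset[OF inj_on_conjugation[OF x] Ks], unfolded comp_def])
  also have "\<dots> = (\<Sum>k\<in>K. card (transporter G H (K \<inter> centralizer_of G {k})))"
  proof (rule sum.cong[OF refl])
    fix k assume "k \<in> K"
    then have k: "{k} \<subseteq> carrier G" using Ks by auto
    have "conj_set G K x \<inter> centralizer_of G {inv x \<otimes> k \<otimes> x}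
        = conj_set G (K \<inter> centralizer_of G {k}) x"
      using centralizer_conj_set[OF k x] conj_set_Int[OF Ks centralizer_subset x]
      by (simp add: conj_set_eq_image)
    then show "card (transporter G (conj_set G H x) (conj_set G K x \<inter> centralizer_of G {inv x \<otimes> k \<otimes> x}))
        = card (transporter G H (K \<inter> centralizer_of G {k}))"
      using card_transporter_conj_set[OF Ob_subset[OF H] _ x, of "K \<inter> centralizer_of G {k}"] Ks by auto
  qed
  finally show ?thesis .
qed

lemma Ob_Int_centralizer:
  assumes K: "K \<in> Ob" and k: "k \<in> K"
  shows "K \<inter> centralizer_of G {k} \<in> Ob"
proof (rule Ob_subgroup_mem[OF K])
  have "{k} \<subseteq> carrier G" using k Ob_subset[OF K] by auto
  then show "subgroup (K \<inter> centralizer_of G {k}) G"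
    using subgroups_Inter_pair Ob_subgroup[OF K] subgroup_centralizer by blast
  show "K \<inter> centralizer_of G {k} \<noteq> {\<one>}"
  proof
    assume triv: "K \<inter> centralizer_of G {k} = {\<one>}"
    have "k \<in> K \<inter> centralizer_of G {k}" using k Ob_subset[OF K] unfolding centralizer_of_def by auto
    then have "k = \<one>" using triv by auto
    then have "K \<inter> centralizer_of G {k} = K"
      using Ob_subset[OF K] unfolding centralizer_of_def by auto
    then show False using triv K by (simp add: mem_Ob_iff)
  qed
qed simp

lemma weighting_homFt: "\<exists>k. is_weighting Ob (\<lambda>H K. card (homFt G H K)) k"
proof (rule weighting_exists_if_conj_invariant)
  fix H K x assume H: "H \<in> Ob" and K: "K \<in> Ob" and x: "x \<in> carrier G"
  have "card (homFt G (conj_set G H x) (conj_set G K x)) * (card (centralizer_of G H) * card K)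
      = card (homFt G H K) * (card (centralizer_of G H) * card K)"
    using card_homFt_eq_sum[OF Ob_conj_set[OF H x] Ob_conj_set[OF K x]] card_homFt_eq_sum[OF H K]
      card_centralizer_conj_set[OF H x] card_conj_set[OF Ob_subset[OF K] x]
      sum_card_transporter_centralizers_conj_set[OF H K x] by simp
  moreover have "0 < card (centralizer_of G H) * card K"
    using card_subgroup_pos subgroup_centralizer Ob_subset Ob_subgroup H K by simp
  ultimately show "card (homFt G (conj_set G H x) (conj_set G K x)) = card (homFt G H K)" by simp
next
  fix H K assume "card (homFt G H K) \<noteq> 0"
  then show "transporter G H K \<noteq> {}" unfolding homFt_def by auto
next
  fix H assume "H \<in> Ob"
  then show "0 < card (homFt G H H)"
    unfolding homFt_def using card_transporter_self_pos[OF Ob_subset] by (auto simp: card_gt_0_iff)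
qed

text \<open>The coweighting of F also works here because \<zeta>(H, K) |C_G(H)| is the average over
  k \<in> K of |N_G(H, C_K(k))|, and every C_K(k) is again a nonidentity p-subgroup.\<close>

lemma coweighting_homFt:
  "is_coweighting Ob (\<lambda>H K. card (homFt G H K))
     (\<lambda>H. - of_int (mobius1 G H) * of_nat (card (centralizer_of G H)) / of_nat (card (carrier G)))"
  unfolding is_coweighting_def
proof
  fix K assume K: "K \<in> Ob"
  define g :: rat where "g = of_nat (card (carrier G))"
  define n :: rat where "n = of_nat (card K)"
  have pos: "0 < g" "0 < n"
    using card_carrier_pos card_subgroup_pos[OF Ob_subgroup[OF K]] unfolding g_def n_def by simp_all
  have summand: "- of_int (mobius1 G H) * of_nat (card (centralizer_of G H)) / g * of_nat (card (homFt G H K))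
      = (\<Sum>k\<in>K. - of_int (mobius1 G H) * of_nat (card (transporter G H (K \<inter> centralizer_of G {k})))) / (n * g)"
    if H: "H \<in> Ob" for H
  proof -
    let ?t = "\<lambda>k. of_nat (card (transporter G H (K \<inter> centralizer_of G {k}))) :: rat"
    have "of_nat (card (homFt G H K)) * of_nat (card (centralizer_of G H)) * n = (\<Sum>k\<in>K. ?t k)"
      using card_homFt_eq_sum[OF H K] unfolding n_def by (metis mult.assoc of_nat_mult of_nat_sum)
    moreover have "(\<Sum>k\<in>K. - of_int (mobius1 G H) * ?t k) = - of_int (mobius1 G H) * (\<Sum>k\<in>K. ?t k)"
      by (rule sum_distrib_left[symmetric])
    ultimately show ?thesis using pos by (simp add: field_simps)
  qed
  have "(\<Sum>H\<in>Ob. - of_int (mobius1 G H) * of_nat (card (centralizer_of G H)) / g * of_nat (card (homFt G H K)))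
      = (\<Sum>k\<in>K. \<Sum>H\<in>Ob. - of_int (mobius1 G H) * of_nat (card (transporter G H (K \<inter> centralizer_of G {k})))) / (n * g)"
  proof -
    have "(\<Sum>H\<in>Ob. - of_int (mobius1 G H) * of_nat (card (centralizer_of G H)) / g * of_nat (card (homFt G H K)))
        = (\<Sum>H\<in>Ob. (\<Sum>k\<in>K. - of_int (mobius1 G H) * of_nat (card (transporter G H (K \<inter> centralizer_of G {k})))) / (n * g))"
      by (rule sum.cong[OF refl]) (rule summand)
    also have "\<dots> = (\<Sum>H\<in>Ob. \<Sum>k\<in>K. - of_int (mobius1 G H) * of_nat (card (transporter G H (K \<inter> centralizer_of G {k})))) / (n * g)"
      by (simp add: sum_divide_distrib)
    finally show ?thesis by (simp only: sum.swap[of _ Ob K])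
  qed
  also have "\<dots> = (\<Sum>k\<in>K. g) / (n * g)"
    using sum_mobius1_mult_card_transporter[OF Ob_Int_centralizer[OF K]] unfolding g_def by simp
  also have "\<dots> = 1" using pos unfolding n_def by simp
  finally show "(\<Sum>H\<in>Ob. - of_int (mobius1 G H) * of_nat (card (centralizer_of G H)) / of_nat (card (carrier G))
      * of_nat (card (homFt G H K))) = (1 :: rat)" unfolding g_def .
qed

lemma euler_char_homFt:
  shows "has_euler_char Ob (\<lambda>H K. card (homFt G H K))"
    and "euler_char Ob (\<lambda>H K. card (homFt G H K)) = euler_char Ob (\<lambda>H K. card (homF G H K))"
  using weighting_homFt euler_char_eq_coweighting_sum[OF finite_Ob _ coweighting_homFt] euler_char_homF(2)
  by auto

lemma card_homO_conj_set:
  assumes "H \<in> Ob" and "K \<in> Ob" and "x \<in> carrier G"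
  shows "card (homO G (conj_set G H x) (conj_set G K x)) = card (homO G H K)"
proof -
  have "card (homO G (conj_set G H x) (conj_set G K x)) * card K = card (homO G H K) * card K"
    using card_homO[OF Ob_subgroup Ob_subset, OF Ob_conj_set Ob_conj_set, OF assms(2,3) assms(1,3)]
      card_homO[OF Ob_subgroup Ob_subset, OF assms(2,1)] card_conj_set[OF Ob_subset[OF assms(2)] assms(3)]
      card_transporter_conj_set[OF Ob_subset Ob_subset assms(3), OF assms(1,2)] by simp
  then show ?thesis using card_subgroup_pos[OF Ob_subgroup[OF assms(2)]] by simp
qed

lemma weighting_homO: "\<exists>k. is_weighting Ob (\<lambda>H K. card (homO G H K)) k"
  by (rule weighting_exists_transporter_quotient[where c = "\<lambda>_. 1" and d = card])
    (use card_homO[OF Ob_subgroup Ob_subset] card_subgroup_pos[OF Ob_subgroup]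
      card_conj_set[OF Ob_subset] in auto)

lemma coweighting_homO:
  "is_coweighting Ob (\<lambda>H K. card (homO G H K))
     (\<lambda>H. (of_nat (card (generators H)) - of_int (mobius1 G H)) / of_nat (card (carrier G)))"
  unfolding is_coweighting_def
proof
  fix K assume K: "K \<in> Ob"
  define g :: rat where "g = of_nat (card (carrier G))"
  define n :: rat where "n = of_nat (card K)"
  have pos: "0 < g" "1 \<le> card K" "0 < n"
    using card_carrier_pos card_subgroup_pos[OF Ob_subgroup[OF K]] unfolding g_def n_def by simp_all
  have zeta: "of_nat (card (homO G H K)) = of_nat (card (transporter G H K)) / n" if "H \<in> Ob" for H
    using card_homO[OF Ob_subgroup[OF K] Ob_subset[OF that]] pos(3) unfolding n_def
    by (simp add: field_simps flip: of_nat_mult)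
  have gens: "(\<Sum>H\<in>Ob. of_nat (card (generators H)) * of_nat (card (transporter G H K))) = g * (n - 1)"
    using sum_mult_card_transporter[OF K, of "\<lambda>H. of_nat (card (generators H))"]
      sum_card_generators[OF K] pos(2) card_generators_conj_set[OF Ob_subset]
    unfolding g_def n_def by (simp add: of_nat_diff flip: of_nat_sum)
  have "(\<Sum>H\<in>Ob. (of_nat (card (generators H)) - of_int (mobius1 G H)) / g * of_nat (card (homO G H K)))
      = (\<Sum>H\<in>Ob. (of_nat (card (generators H)) * of_nat (card (transporter G H K))
          + - of_int (mobius1 G H) * of_nat (card (transporter G H K))) / (g * n))"
    by (rule sum.cong[OF refl]) (simp add: zeta field_simps)
  also have "\<dots> = (g * (n - 1) + g) / (g * n)"
    unfolding sum_divide_distrib[symmetric] sum.distrib gens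
    using sum_mobius1_mult_card_transporter[OF K] unfolding g_def by simp
  also have "\<dots> = 1" using pos by (simp add: field_simps)
  finally show "(\<Sum>H\<in>Ob. (of_nat (card (generators H)) - of_int (mobius1 G H)) / of_nat (card (carrier G))
      * of_nat (card (homO G H K))) = (1 :: rat)" unfolding g_def .
qed

lemma sum_card_generators_eq_sum_classes:
  "(\<Sum>H\<in>Ob. of_nat (card (generators H)) / of_nat (card (carrier G)))
    = (of_nat p - 1) / of_nat p
      * sum_classes G {C \<in> Ob. cyclic_subgroup G C} (\<lambda>C. 1 / of_nat (card (homO G C C)))"
proof -
  let ?Cyc = "{C \<in> Ob. cyclic_subgroup G C}"
  let ?g = "of_nat (card (carrier G)) :: rat"
  have p: "(of_nat p :: rat) > 0" using prime_p prime_gt_0_nat by simp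
  have "(\<Sum>H\<in>Ob. of_nat (card (generators H)) / ?g) = (\<Sum>C\<in>?Cyc. of_nat (card (generators C)) / ?g)"
    using finite_Ob generators_empty_if_not_cyclic
    by (intro sum.mono_neutral_right) auto
  also have "\<dots> = (\<Sum>C\<in>?Cyc. (of_nat p - 1) / of_nat p
      * (1 / of_nat (card (homO G C C)) * of_nat (card (transporter G C C)) / ?g))"
  proof (rule sum.cong[OF refl])
    fix C assume "C \<in> ?Cyc"
    then have C: "C \<in> Ob" "cyclic_subgroup G C" by auto
    have "of_nat p * of_nat (card (generators C)) = ((of_nat p - 1) * of_nat (card C) :: rat)"
      using card_generators_cyclic_Ob[OF C] prime_gt_0_nat[OF prime_p]
      by (metis of_nat_1 of_nat_diff of_nat_mult Suc_leI One_nat_def)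
    moreover have "of_nat (card (transporter G C C)) = (of_nat (card (homO G C C)) * of_nat (card C) :: rat)"
      using card_homO[OF Ob_subgroup Ob_subset, OF C(1) C(1)] by (metis of_nat_mult)
    moreover have "card (homO G C C) > 0"
      using card_homO[OF Ob_subgroup Ob_subset, OF C(1) C(1)] card_transporter_self_pos[OF Ob_subset[OF C(1)]]
      by (metis gr0I mult_0)
    ultimately show "of_nat (card (generators C)) / ?g = (of_nat p - 1) / of_nat p
        * (1 / of_nat (card (homO G C C)) * of_nat (card (transporter G C C)) / ?g)"
      using p card_carrier_pos by (simp add: field_simps)
  qed
  also have "\<dots> = (of_nat p - 1) / of_nat p * sum_classes G ?Cyc (\<lambda>C. 1 / of_nat (card (homO G C C)))"
    unfolding sum_distrib_left[symmetric]
    by (subst sum_classes_eq) (use Ob_conj_set cyclic_subgroup_conj_set card_homO_conj_set in auto)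
  finally show ?thesis .
qed

lemma euler_char_homO:
  shows "has_euler_char Ob (\<lambda>H K. card (homO G H K))"
    and "euler_char Ob (\<lambda>H K. card (homO G H K)) = euler_char Ob (\<lambda>H K. card (homT G H K))
      + (of_nat p - 1) / of_nat p
        * sum_classes G {C \<in> Ob. cyclic_subgroup G C} (\<lambda>C. 1 / of_nat (card (homO G C C)))"
proof -
  obtain k where "is_weighting Ob (\<lambda>H K. card (homO G H K)) k" using weighting_homO by blast
  note euler = euler_char_eq_coweighting_sum[OF finite_Ob this coweighting_homO]
  show "has_euler_char Ob (\<lambda>H K. card (homO G H K))" by (rule euler(1))
  have "euler_char Ob (\<lambda>H K. card (homO G H K))
      = (\<Sum>H\<in>Ob. - of_int (mobius1 G H) / of_nat (card (carrier G)))
        + (\<Sum>H\<in>Ob. of_nat (card (generators H)) / of_nat (card (carrier G)))"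
    unfolding euler(2) by (simp add: sum.distrib[symmetric] diff_divide_distrib)
  then show "euler_char Ob (\<lambda>H K. card (homO G H K)) = euler_char Ob (\<lambda>H K. card (homT G H K))
      + (of_nat p - 1) / of_nat p
        * sum_classes G {C \<in> Ob. cyclic_subgroup G C} (\<lambda>C. 1 / of_nat (card (homO G C C)))"
    using euler_char_homT(2) sum_card_generators_eq_sum_classes by simp
qed

end

theorem theorem1p1:
  fixes G :: "('a,'b) monoid_scheme" and p :: nat
  assumes "group G" and "finite (carrier G)" and "Factorial_Ring.prime p"
  defines "Ob \<equiv> nonid_p_subgroups G p"
  defines "zS \<equiv> (\<lambda>H K. card (homS H K))"
      and "zT \<equiv> (\<lambda>H K. card (homT G H K))"
      and "zL \<equiv> (\<lambda>H K. card (homL G p H K))"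
      and "zF \<equiv> (\<lambda>H K. card (homF G H K))"
      and "zFt \<equiv> (\<lambda>H K. card (homFt G H K))"
      and "zO \<equiv> (\<lambda>H K. card (homO G H K))"
  shows "has_euler_char Ob zS \<and> has_euler_char Ob zT \<and> has_euler_char Ob zL
       \<and> has_euler_char Ob zF \<and> has_euler_char Ob zFt \<and> has_euler_char Ob zO
       \<and> euler_char Ob zT = sum_classes G Ob (\<lambda>H. - of_int (mobius1 G H) / of_nat (zT H H))
       \<and> euler_char Ob zL = sum_classes G Ob (\<lambda>H. - of_int (mobius1 G H) / of_nat (zL H H))
       \<and> euler_char Ob zF = sum_classes G Ob (\<lambda>H. - of_int (mobius1 G H) / of_nat (zF H H))
       \<and> euler_char Ob zS = of_nat (card (carrier G)) * euler_char Ob zT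
       \<and> euler_char Ob zFt = euler_char Ob zF
       \<and> euler_char Ob zO = euler_char Ob zT
            + (of_nat p - 1) / of_nat p
              * sum_classes G {C \<in> Ob. cyclic_subgroup G C} (\<lambda>C. 1 / of_nat (zO C C))"
proof -
  interpret P: finite_group_prime G p
    using assms(1-3) by (simp add: finite_group_prime_def finite_group_def finite_group_axioms_def
      finite_group_prime_axioms_def)
  have "euler_char Ob zS = of_nat (card (carrier G)) * euler_char Ob zT"
    using P.euler_char_homS(2) P.euler_char_homT(2) P.card_carrier_pos
    unfolding Ob_def zS_def zT_def by (simp add: sum_distrib_left)
  then show ?thesis
    using P.euler_char_homS(1) P.euler_char_homT(1,3) P.euler_char_homL P.euler_char_homF(1,3)
      P.euler_char_homFt P.euler_char_homO
    unfolding Ob_def zS_def zT_def zL_def zF_def zFt_def zO_def by simp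
qed

end
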